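(* Let $k$, $t$ and $\lambda$ be positive integers such that $k \geq t+1$ and $t\geq 2$, and let $\alpha$ be the unique positive real number satisfying \[ \frac{\lambda(2^{t+1}-1)}{t!}\,\alpha^t+2\left(\frac{e\lambda(t+1)(2^{t+1}-1)}{t!}\right)^{1/t}\alpha=1, \] where $e$ is the base of the natural logarithm. Then for every integer $n \geq k$, every partial $(n,k,t)_\lambda$-system has a cyclically $\ell$-good sequencing for each positive integer $\ell \leq \alpha n^{1/t}$.
   Context: For positive integers $n,k,t,\lambda$ with $n \geq k > t \geq 2$, a partial $(n,k,t)_\lambda$-system is a pair $(X,\mathcal{B})$ where $X$ is an $n$-set of vertices and $\mathcal{B}$ is a collection of $k$-subsets of $X$ (blocks) such that each $t$-subset of $X$ is contained in at most $\lambda$ blocks. An independent set is a subset $Y\subseteq X$ containing no block. Let $\mathbb{Z}_n=\{0,\ldots,n-1\}$ be the cyclic group of order $n$. A sequencing is a bijection $\varphi:\mathbb{Z}_n\to X$. A set $S\subseteq X$ is cyclically consecutive if $S=\{\varphi(i),\varphi(i+1),\ldots,\varphi(i+|S|-1)\}$ for some $i\in\mathbb{Z}_n$ (addition in $\mathbb{Z}_n$). For a positive integer $\ell$, a sequencing is cyclically $\ell$-good if every set of $\ell$ cyclically consecutive vertices is an independent set. *)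

theory Defs
  imports "HOL-Analysis.Analysis"
begin

definition partial_system :: "nat \<Rightarrow> nat \<Rightarrow> nat \<Rightarrow> 'a set \<Rightarrow> 'a set set \<Rightarrow> bool" where
  "partial_system k t lam X \<B> \<longleftrightarrow>
     finite X \<and> (\<forall>B\<in>\<B>. B \<subseteq> X \<and> card B = k) \<and>
     (\<forall>T. T \<subseteq> X \<and> card T = t \<longrightarrow> card {B\<in>\<B>. T \<subseteq> B} \<le> lam)"

definition independent_set :: "'a set set \<Rightarrow> 'a set \<Rightarrow> bool" where
  "independent_set \<B> Y \<longleftrightarrow> (\<forall>B\<in>\<B>. \<not> B \<subseteq> Y)"

definition sequencing :: "nat \<Rightarrow> 'a set \<Rightarrow> (nat \<Rightarrow> 'a) \<Rightarrow> bool" where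
  "sequencing n X \<phi> \<longleftrightarrow> bij_betw \<phi> {0..<n} X"

definition cyc_consecutive :: "nat \<Rightarrow> (nat \<Rightarrow> 'a) \<Rightarrow> 'a set \<Rightarrow> bool" where
  "cyc_consecutive n \<phi> S \<longleftrightarrow>
     (\<exists>i<n. S = (\<lambda>j. \<phi> ((i + j) mod n)) ` {0..<card S})"

definition cyclically_good :: "nat \<Rightarrow> 'a set set \<Rightarrow> (nat \<Rightarrow> 'a) \<Rightarrow> nat \<Rightarrow> bool" where
  "cyclically_good n \<B> \<phi> l \<longleftrightarrow>
     (\<forall>S. card S = l \<and> cyc_consecutive n \<phi> S \<longrightarrow> independent_set \<B> S)"

end

theory Submission
  imports Defs "HOL-Combinatorics.Multiset_Permutations"
begin

definition determined_by :: "'a set \<Rightarrow> ('a \<Rightarrow> 'b set) \<Rightarrow> 'a set \<Rightarrow> ('a \<Rightarrow> 'b) set \<Rightarrow> bool" where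
  "determined_by X V S E \<longleftrightarrow> (\<exists>P. E = {c \<in> PiE X V. restrict c S \<in> P})"

lemma bij_betw_restrict_pair:
  assumes "S \<subseteq> X"
  shows "bij_betw (\<lambda>c. (restrict c S, restrict c (X - S))) (PiE X V) (PiE S V \<times> PiE (X - S) V)"
proof (rule bij_betw_byWitness[where f' = "merge S (X - S)"])
  have "S \<union> (X - S) = X" using assms by auto
  then show "\<forall>c\<in>PiE X V. merge S (X - S) (restrict c S, restrict c (X - S)) = c"
    by simp
  show "\<forall>fg\<in>PiE S V \<times> PiE (X - S) V.
      (\<lambda>c. (restrict c S, restrict c (X - S))) (merge S (X - S) fg) = fg"
    by auto
  show "(\<lambda>c. (restrict c S, restrict c (X - S))) ` PiE X V \<subseteq> PiE S V \<times> PiE (X - S) V"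
    using assms by (auto simp: PiE_iff)
  show "merge S (X - S) ` (PiE S V \<times> PiE (X - S) V) \<subseteq> PiE X V"
    using assms by (auto simp: PiE_iff merge_def extensional_def)
qed

lemma card_PiE_restrict_split:
  assumes "S \<subseteq> X"
  shows "card {c \<in> PiE X V. restrict c S \<in> P \<and> restrict c (X - S) \<in> Q}
           = card (P \<inter> PiE S V) * card (Q \<inter> PiE (X - S) V)"
proof -
  let ?split = "\<lambda>c. (restrict c S, restrict c (X - S))"
  have "bij_betw ?split {c \<in> PiE X V. ?split c \<in> P \<times> Q}
          {fg \<in> PiE S V \<times> PiE (X - S) V. fg \<in> P \<times> Q}"
    by (rule bij_betw_Collect[OF bij_betw_restrict_pair[OF assms]]) simp
  moreover have "{fg \<in> PiE S V \<times> PiE (X - S) V. fg \<in> P \<times> Q}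
      = (P \<inter> PiE S V) \<times> (Q \<inter> PiE (X - S) V)" by auto
  ultimately have "card {c \<in> PiE X V. ?split c \<in> P \<times> Q}
      = card ((P \<inter> PiE S V) \<times> (Q \<inter> PiE (X - S) V))"
    using bij_betw_same_card by fastforce
  then show ?thesis
    by (simp only: mem_Times_iff fst_conv snd_conv card_cartesian_product)
qed

lemma card_Int_determined_by_complement:
  assumes "S \<subseteq> X" "determined_by X V S A" "determined_by X V (X - S) G"
  shows "card (A \<inter> G) * card (PiE X V) = card A * card G"
proof -
  obtain P where P: "A = {c \<in> PiE X V. restrict c S \<in> P \<and> restrict c (X - S) \<in> UNIV}"
    using assms(2) unfolding determined_by_def by auto
  obtain Q where Q: "G = {c \<in> PiE X V. restrict c S \<in> UNIV \<and> restrict c (X - S) \<in> Q}"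
    using assms(3) unfolding determined_by_def by auto
  have "A \<inter> G = {c \<in> PiE X V. restrict c S \<in> P \<and> restrict c (X - S) \<in> Q}"
    unfolding P Q by auto
  then have "card (A \<inter> G) = card (P \<inter> PiE S V) * card (Q \<inter> PiE (X - S) V)"
    by (simp only: card_PiE_restrict_split[OF assms(1)])
  moreover have "card A = card (P \<inter> PiE S V) * card (PiE (X - S) V)"
    by (subst P, subst card_PiE_restrict_split[OF assms(1)]) simp
  moreover have "card G = card (PiE S V) * card (Q \<inter> PiE (X - S) V)"
    by (subst Q, subst card_PiE_restrict_split[OF assms(1)]) simp
  moreover have "card (PiE X V) = card (PiE S V) * card (PiE (X - S) V)"
    using card_PiE_restrict_split[OF assms(1), of V UNIV UNIV] by simp
  ultimately show ?thesis by simp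
qed

lemma determined_by_Diff_UN:
  fixes V :: "'a \<Rightarrow> 'b set"
  assumes "\<And>j. j \<in> J \<Longrightarrow> determined_by X V (S j) (E j) \<and> S j \<subseteq> T"
  shows "determined_by X V T (PiE X V - (\<Union>j\<in>J. E j))"
proof -
  have "\<forall>j\<in>J. \<exists>P. E j = {c \<in> PiE X V. restrict c (S j) \<in> P}"
    using assms unfolding determined_by_def by blast
  then obtain P where P: "\<And>j. j \<in> J \<Longrightarrow> E j = {c \<in> PiE X V. restrict c (S j) \<in> P j}"
    by metis
  have "restrict (restrict c T) (S j) = restrict c (S j)" if "j \<in> J" for c :: "'a \<Rightarrow> 'b" and j
    using assms[OF that] by (force simp: restrict_def)
  then have "PiE X V - (\<Union>j\<in>J. E j)
      = {c \<in> PiE X V. restrict c T \<in> {f. \<forall>j\<in>J. restrict f (S j) \<notin> P j}}"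
    using P by auto
  then show ?thesis unfolding determined_by_def by blast
qed

lemma card_Int_Diff_UN_le:
  fixes V :: "'a \<Rightarrow> 'b set" and p :: real
  assumes "S \<subseteq> X" "determined_by X V S A" "card A \<le> p * card (PiE X V)" "0 < card (PiE X V)"
    and "\<And>j. j \<in> J \<Longrightarrow> determined_by X V (T j) (E j) \<and> T j \<subseteq> X - S"
  shows "card (A \<inter> (PiE X V - (\<Union>j\<in>J. E j))) \<le> p * card (PiE X V - (\<Union>j\<in>J. E j))"
proof -
  let ?G = "PiE X V - (\<Union>j\<in>J. E j)"
  have "determined_by X V (X - S) ?G" using assms(5) by (rule determined_by_Diff_UN)
  then have "card (A \<inter> ?G) * card (PiE X V) = card A * card ?G"
    using assms(1,2) by (intro card_Int_determined_by_complement)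
  then have "real (card (A \<inter> ?G)) * real (card (PiE X V)) = real (card A) * real (card ?G)"
    by (metis of_nat_mult)
  also have "\<dots> \<le> p * card (PiE X V) * card ?G"
    using assms(3) by (intro mult_right_mono) auto
  finally show ?thesis using assms(4) by (simp add: mult.commute mult.left_commute)
qed

lemma card_Diff_UN_ge_power:
  fixes \<Omega> :: "'c set" and E :: "'i \<Rightarrow> 'c set" and x :: real
  assumes "finite \<Omega>" "finite K" "L \<inter> K = {}" "x \<le> 1"
    and bad: "\<And>J j. L \<subseteq> J \<Longrightarrow> J \<subset> L \<union> K \<Longrightarrow> j \<in> K - J \<Longrightarrow>
      card (E j \<inter> (\<Omega> - \<Union>(E ` J))) \<le> x * card (\<Omega> - \<Union>(E ` J))"
  shows "(1 - x) ^ card K * card (\<Omega> - \<Union>(E ` L)) \<le> card (\<Omega> - \<Union>(E ` (L \<union> K)))"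
  using assms(2,3) bad
proof (induction K rule: finite_induct)
  case empty
  then show ?case by simp
next
  case (insert j K)
  let ?G = "\<Omega> - \<Union>(E ` (L \<union> K))"
  have IH: "(1 - x) ^ card K * card (\<Omega> - \<Union>(E ` L)) \<le> card ?G"
    using insert by (intro insert.IH) blast+
  have "\<Omega> - \<Union>(E ` (L \<union> insert j K)) = ?G - E j \<inter> ?G"
    by auto
  moreover have "card (E j \<inter> ?G) \<le> card ?G"
    using assms(1) by (intro card_mono) auto
  ultimately have "real (card (\<Omega> - \<Union>(E ` (L \<union> insert j K)))) = card ?G - card (E j \<inter> ?G)"
    using assms(1) by (simp add: card_Diff_subset of_nat_diff)
  moreover have "card (E j \<inter> ?G) \<le> x * card ?G"
    using insert by (intro insert.prems(2)) auto
  ultimately have "(1 - x) * card ?G \<le> card (\<Omega> - \<Union>(E ` (L \<union> insert j K)))"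
    by (simp add: algebra_simps)
  moreover have "(1 - x) ^ card (insert j K) * card (\<Omega> - \<Union>(E ` L)) \<le> (1 - x) * card ?G"
    using IH insert(1,2) assms(4) by (simp add: mult.assoc mult_left_mono)
  ultimately show ?case by linarith
qed

lemma lovasz_local_lemma_PiE:
  fixes X :: "'a set" and V :: "'a \<Rightarrow> 'b set" and E :: "'i \<Rightarrow> ('a \<Rightarrow> 'b) set"
    and S :: "'i \<Rightarrow> 'a set" and p x :: real
  assumes "finite X" "\<And>a. a \<in> X \<Longrightarrow> finite (V a)" "PiE X V \<noteq> {}" "finite I"
    and determined: "\<And>i. i \<in> I \<Longrightarrow> S i \<subseteq> X \<and> determined_by X V (S i) (E i)"
    and small: "\<And>i. i \<in> I \<Longrightarrow> card (E i) \<le> p * card (PiE X V)"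
    and sparse: "\<And>i. i \<in> I \<Longrightarrow> card {j \<in> I. j \<noteq> i \<and> S j \<inter> S i \<noteq> {}} \<le> d"
    and "0 \<le> x" "x < 1" "p \<le> x * (1 - x) ^ d"
  shows "PiE X V - (\<Union>i\<in>I. E i) \<noteq> {}"
proof -
  let ?\<Omega> = "PiE X V"
  let ?avoid = "\<lambda>J. ?\<Omega> - \<Union>(E ` J)"
  have fin\<Omega>: "finite ?\<Omega>" using assms(1,2) by (rule finite_PiE)
  then have card\<Omega>: "card ?\<Omega> > 0" using assms(3) by (simp add: card_gt_0_iff)
  \<comment> \<open>given that the events of \<open>J\<close> are avoided, any other event has probability at most \<open>x\<close>\<close>
  have "\<forall>i\<in>I - J. card (E i \<inter> ?avoid J) \<le> x * card (?avoid J)" if "J \<subseteq> I" for J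
    using finite_subset[OF that assms(4)] that
  proof (induction J rule: finite_psubset_induct)
    case (psubset J)
    show ?case
    proof
      fix i assume i: "i \<in> I - J"
      define J1 where "J1 = {j \<in> J. S j \<inter> S i \<noteq> {}}"
      let ?J2 = "J - J1"
      have "card J1 \<le> card {j \<in> I. j \<noteq> i \<and> S j \<inter> S i \<noteq> {}}"
        using i psubset.prems assms(4) unfolding J1_def by (intro card_mono) auto
      then have "card J1 \<le> d" using sparse[of i] i by simp
      have "real (card (E i \<inter> ?avoid J)) \<le> card (E i \<inter> ?avoid ?J2)"
        using fin\<Omega> by (intro of_nat_mono card_mono) auto
      also have "\<dots> \<le> p * card (?avoid ?J2)"
        using determined psubset.prems i small[of i] card\<Omega> unfolding J1_def
        by (intro card_Int_Diff_UN_le[where S = "S i" and T = S]) auto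
      also have "\<dots> \<le> x * (1 - x) ^ d * card (?avoid ?J2)"
        using assms(10) by (simp add: mult_right_mono)
      also have "\<dots> \<le> x * (1 - x) ^ card J1 * card (?avoid ?J2)"
        using assms(8,9) \<open>card J1 \<le> d\<close>
        by (intro mult_right_mono mult_left_mono power_decreasing) auto
      also have "\<dots> \<le> x * card (?avoid (?J2 \<union> J1))"
        using psubset fin\<Omega> assms(8,9) unfolding J1_def
        by (subst mult.assoc, intro mult_left_mono card_Diff_UN_ge_power) auto
      also have "?J2 \<union> J1 = J" unfolding J1_def by auto
      finally show "card (E i \<inter> ?avoid J) \<le> x * card (?avoid J)" .
    qed
  qed
  then have "(1 - x) ^ card I * card (?avoid {}) \<le> card (?avoid ({} \<union> I))"
    using assms(4,9) fin\<Omega> by (intro card_Diff_UN_ge_power) auto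
  moreover have "0 < (1 - x) ^ card I * card (?avoid {})"
    using card\<Omega> assms(9) by simp
  ultimately have "card (?avoid I) > 0" by simp
  then show ?thesis by (metis card.empty less_irrefl)
qed

lemma exp_minus_one_le_power: "exp (-1) \<le> (1 - 1 / (real d + 1)) ^ d"
proof (cases "d = 0")
  case False
  have "(1 + 1 / real d) ^ d \<le> exp 1"
    using exp_ge_one_plus_x_over_n_power_n[of d 1] False by simp
  moreover have "1 - 1 / (real d + 1) = inverse (1 + 1 / real d)"
    using False by (simp add: field_simps)
  moreover have "0 < (1 + 1 / real d) ^ d" by (simp add: add_pos_nonneg)
  ultimately show ?thesis
    by (simp add: power_inverse exp_minus le_imp_inverse_le)
qed simp

corollary lovasz_local_lemma_PiE_symmetric:
  fixes X :: "'a set" and V :: "'a \<Rightarrow> 'b set" and E :: "'i \<Rightarrow> ('a \<Rightarrow> 'b) set"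
    and S :: "'i \<Rightarrow> 'a set" and p :: real
  assumes "finite X" "\<And>a. a \<in> X \<Longrightarrow> finite (V a)" "PiE X V \<noteq> {}" "finite I"
    and "\<And>i. i \<in> I \<Longrightarrow> S i \<subseteq> X \<and> determined_by X V (S i) (E i)"
    and "\<And>i. i \<in> I \<Longrightarrow> card (E i) \<le> p * card (PiE X V)"
    and "\<And>i. i \<in> I \<Longrightarrow> card {j \<in> I. j \<noteq> i \<and> S j \<inter> S i \<noteq> {}} \<le> d"
    and "exp 1 * p * (d + 1) \<le> 1"
  shows "PiE X V - (\<Union>i\<in>I. E i) \<noteq> {}"
proof -
  have "0 < exp 1 * (real d + 1)" by simp
  then have "p \<le> 1 / (exp 1 * (d + 1))"
    using assms(8) by (simp add: pos_le_divide_eq ac_simps)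
  then have p: "p \<le> exp (-1) / (real d + 1)"
    by (simp add: exp_minus field_simps)
  obtain x :: real where "0 \<le> x" "x < 1" "p \<le> x * (1 - x) ^ d"
  proof (cases "d = 0")
    case True
    have "exp (-1) \<le> (1 / 2 :: real)"
      using exp_ge_add_one_self[of 1] by (simp add: exp_minus field_simps)
    then show ?thesis using p True by (intro that[of "1 / 2"]) auto
  next
    case False
    note p
    also have "exp (-1) / (real d + 1) \<le> (1 - 1 / (real d + 1)) ^ d / (real d + 1)"
      using exp_minus_one_le_power[of d] by (intro divide_right_mono) auto
    also have "\<dots> = 1 / (real d + 1) * (1 - 1 / (real d + 1)) ^ d"
      by simp
    finally have "p \<le> 1 / (real d + 1) * (1 - 1 / (real d + 1)) ^ d" .
    then show ?thesis using False by (intro that[of "1 / (real d + 1)"]) auto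
  qed
  then show ?thesis using assms(1-7) by (rule lovasz_local_lemma_PiE[rotated -3])
qed

lemma card_PiE_two_consecutive_values:
  assumes "finite S" "S \<noteq> {}" "2 \<le> M"
  shows "card {f \<in> PiE S (\<lambda>_. {..<M}). \<exists>j<M. \<forall>v\<in>S. f v = j \<or> f v = Suc j mod M}
           \<le> M * (2 ^ card S - 1)"
proof -
  have Suc_mod_neq: "Suc j mod M \<noteq> j" if "j < M" for j
    using that assms(3) by (cases "Suc j = M") auto
  define F where "F j = PiE S (\<lambda>_. {j, Suc j mod M}) - {restrict (\<lambda>_. Suc j mod M) S}" for j
  let ?Q = "{f \<in> PiE S (\<lambda>_. {..<M}). \<exists>j<M. \<forall>v\<in>S. f v = j \<or> f v = Suc j mod M}"
  have cover: "?Q \<subseteq> (\<Union>j<M. F j)"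
  proof clarify
    fix f j assume f: "f \<in> PiE S (\<lambda>_. {..<M})" and j: "j < M" "\<forall>v\<in>S. f v = j \<or> f v = Suc j mod M"
    show "f \<in> (\<Union>j<M. F j)"
    proof (cases "f = restrict (\<lambda>_. Suc j mod M) S")
      case False
      then have "f \<in> F j" using f j unfolding F_def by (auto simp: PiE_iff)
      then show ?thesis using j by auto
    next
      case True
      \<comment> \<open>a constant function lies in the window starting at its value\<close>
      let ?j' = "Suc j mod M"
      have "?j' < M" using assms(3) by simp
      moreover obtain v where "v \<in> S" using assms(2) by auto
      ultimately have "f \<in> F ?j'"
        using True Suc_mod_neq[of ?j'] unfolding F_def by (auto simp: fun_eq_iff)
      then show ?thesis using \<open>?j' < M\<close> by auto
    qed
  qed
  have card_F: "card (F j) = 2 ^ card S - 1" if "j < M" for j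
  proof -
    have "card (PiE S (\<lambda>_. {j, Suc j mod M})) = 2 ^ card S"
      using assms(1) Suc_mod_neq[OF that] by (simp add: card_PiE numeral_2_eq_2)
    moreover have "restrict (\<lambda>_. Suc j mod M) S \<in> PiE S (\<lambda>_. {j, Suc j mod M})"
      by auto
    moreover have "finite (PiE S (\<lambda>_. {j, Suc j mod M}))"
      using assms(1) by (intro finite_PiE) auto
    ultimately show ?thesis unfolding F_def by (simp add: card_Diff_singleton)
  qed
  have "finite (\<Union>j<M. F j)"
    unfolding F_def using assms(1) by (auto intro!: finite_PiE)
  then have "card ?Q \<le> card (\<Union>j<M. F j)"
    using cover by (rule card_mono)
  also have "\<dots> \<le> (\<Sum>j<M. card (F j))"
    by (rule card_UN_le) simp
  also have "\<dots> = M * (2 ^ card S - 1)"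
    using card_F by simp
  finally show ?thesis .
qed

lemma card_colourings_two_consecutive_on:
  assumes "finite X" "S \<subseteq> X" "S \<noteq> {}" "2 \<le> M"
  shows "card {c \<in> PiE X (\<lambda>_. {..<M}).
            restrict c S \<in> {f. \<exists>j<M. \<forall>v\<in>S. f v = j \<or> f v = Suc j mod M}}
         \<le> (2 ^ card S - 1) / real M ^ (card S - 1) * card (PiE X (\<lambda>_. {..<M}))"
proof -
  let ?Q = "{f. \<exists>j<M. \<forall>v\<in>S. f v = j \<or> f v = Suc j mod M}"
  let ?E = "{c \<in> PiE X (\<lambda>_. {..<M}). restrict c S \<in> ?Q}"
  have finS: "finite S" using assms(1,2) by (rule finite_subset[rotated])
  have "card S \<le> card X" using assms(1,2) by (rule card_mono)
  moreover have "1 \<le> card S" using assms(3) finS by (simp add: Suc_leI card_gt_0_iff)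
  ultimately have card_X: "card X = (card S - 1) + Suc (card (X - S))"
    using assms(2) finS by (simp add: card_Diff_subset)
  have "?Q \<inter> PiE S (\<lambda>_. {..<M})
      = {f \<in> PiE S (\<lambda>_. {..<M}). \<exists>j<M. \<forall>v\<in>S. f v = j \<or> f v = Suc j mod M}"
    by auto
  then have "card (?Q \<inter> PiE S (\<lambda>_. {..<M})) \<le> M * (2 ^ card S - 1)"
    using card_PiE_two_consecutive_values[OF finS assms(3,4)] by simp
  moreover have "card ?E = card (?Q \<inter> PiE S (\<lambda>_. {..<M})) * card (PiE (X - S) (\<lambda>_. {..<M}))"
    using card_PiE_restrict_split[OF assms(2), of "\<lambda>_. {..<M}" ?Q UNIV] by simp
  ultimately have "card ?E \<le> M ^ Suc (card (X - S)) * (2 ^ card S - 1)"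
    using assms(1,2) by (simp add: card_PiE finite_subset)
  then have "real (card ?E) \<le> real (M ^ Suc (card (X - S)) * (2 ^ card S - 1))"
    by (simp only: of_nat_le_iff)
  also have "\<dots> = real M ^ Suc (card (X - S)) * (2 ^ card S - 1)"
    by (simp add: of_nat_diff)
  also have "\<dots> = (2 ^ card S - 1) / real M ^ (card S - 1) * card (PiE X (\<lambda>_. {..<M}))"
    using assms(1,4) card_X by (simp add: card_PiE power_add)
  finally show ?thesis .
qed

lemma card_edges_meeting_le:
  fixes \<B> :: "'a set set" and S :: "'a set \<Rightarrow> 'a set"
  assumes "finite \<B>" "B \<in> \<B>" "finite (S B)" "S B \<noteq> {}" "\<And>B'. B' \<in> \<B> \<Longrightarrow> S B' \<subseteq> B'"
    and "\<And>v. v \<in> S B \<Longrightarrow> card {B' \<in> \<B>. v \<in> B'} \<le> \<Delta>"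
  shows "card {B' \<in> \<B>. B' \<noteq> B \<and> S B' \<inter> S B \<noteq> {}} + 1 \<le> card (S B) * \<Delta>"
proof -
  let ?U = "\<Union>v\<in>S B. {B' \<in> \<B>. v \<in> B'}"
  have "finite ?U" by (rule finite_subset[OF _ assms(1)]) auto
  have "B \<in> ?U" using assms(2,4,5) by blast
  have "{B' \<in> \<B>. B' \<noteq> B \<and> S B' \<inter> S B \<noteq> {}} \<subseteq> ?U - {B}"
    using assms(5) by blast
  then have "card {B' \<in> \<B>. B' \<noteq> B \<and> S B' \<inter> S B \<noteq> {}} \<le> card (?U - {B})"
    using \<open>finite ?U\<close> by (intro card_mono) auto
  also have "\<dots> = card ?U - 1" using \<open>B \<in> ?U\<close> by (rule card_Diff_singleton)
  moreover have "card ?U > 0" using \<open>finite ?U\<close> \<open>B \<in> ?U\<close> card_gt_0_iff by blast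
  ultimately have "card {B' \<in> \<B>. B' \<noteq> B \<and> S B' \<inter> S B \<noteq> {}} + 1 \<le> card ?U"
    by linarith
  also have "\<dots> \<le> (\<Sum>v\<in>S B. card {B' \<in> \<B>. v \<in> B'})"
    using assms(3) by (rule card_UN_le)
  also have "\<dots> \<le> card (S B) * \<Delta>"
    using sum_mono[of "S B" _ "\<lambda>_. \<Delta>"] assms(6) by (simp add: mult.commute)
  finally show ?thesis .
qed

lemma exists_colouring_not_two_consecutive_on:
  fixes X :: "'a set" and S :: "'i \<Rightarrow> 'a set" and p :: real
  assumes "finite X" "finite I" "2 \<le> M"
    and S: "\<And>i. i \<in> I \<Longrightarrow> S i \<subseteq> X \<and> S i \<noteq> {} \<and> card (S i) = s"
    and "\<And>i. i \<in> I \<Longrightarrow> card {j \<in> I. j \<noteq> i \<and> S j \<inter> S i \<noteq> {}} \<le> d"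
    and "exp 1 * ((2 ^ s - 1) / real M ^ (s - 1)) * (real d + 1) \<le> 1"
  shows "\<exists>col \<in> PiE X (\<lambda>_. {..<M}). \<forall>i\<in>I. \<forall>j<M. \<exists>v\<in>S i. col v \<noteq> j \<and> col v \<noteq> Suc j mod M"
proof -
  define E where "E i = {c \<in> PiE X (\<lambda>_. {..<M}).
    restrict c (S i) \<in> {f. \<exists>j<M. \<forall>v\<in>S i. f v = j \<or> f v = Suc j mod M}}" for i
  have "PiE X (\<lambda>_. {..<M}) - (\<Union>i\<in>I. E i) \<noteq> {}"
  proof (rule lovasz_local_lemma_PiE_symmetric[where S = S])
    show "PiE X (\<lambda>_. {..<M}) \<noteq> {}" using assms(3) by (simp add: PiE_eq_empty_iff lessThan_empty_iff)
    show "S i \<subseteq> X \<and> determined_by X (\<lambda>_. {..<M}) (S i) (E i)" if "i \<in> I" for i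
      using S[OF that] unfolding determined_by_def E_def by blast
    show "card (E i) \<le> (2 ^ s - 1) / real M ^ (s - 1) * card (PiE X (\<lambda>_. {..<M}))" if "i \<in> I" for i
    proof -
      have "S i \<subseteq> X" "S i \<noteq> {}" "card (S i) = s" using S[OF that] by auto
      then show ?thesis
        using card_colourings_two_consecutive_on[OF assms(1) _ _ assms(3), of "S i"]
        unfolding E_def by simp
    qed
    show "exp 1 * ((2 ^ s - 1) / real M ^ (s - 1)) * (real d + 1) \<le> 1" by (rule assms(6))
  qed (use assms in auto)
  then obtain col where "col \<in> PiE X (\<lambda>_. {..<M})" "\<And>i. i \<in> I \<Longrightarrow> col \<notin> E i" by blast
  moreover have "\<forall>j<M. \<exists>v\<in>S i. col v \<noteq> j \<and> col v \<noteq> Suc j mod M" if "col \<notin> E i" for i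
    using that \<open>col \<in> PiE X (\<lambda>_. {..<M})\<close> unfolding E_def by auto
  ultimately show ?thesis by blast
qed

theorem exists_colouring_without_edge_in_consecutive_classes:
  fixes X :: "'a set" and \<B> :: "'a set set" and \<Delta> :: real
  assumes "finite X" and edges: "\<And>B. B \<in> \<B> \<Longrightarrow> B \<subseteq> X \<and> s \<le> card B"
    and "1 \<le> s" "2 \<le> M"
    and degree: "\<And>v. v \<in> X \<Longrightarrow> card {B \<in> \<B>. v \<in> B} \<le> \<Delta>"
    and "exp 1 * ((2 ^ s - 1) / real M ^ (s - 1)) * (s * \<Delta>) \<le> 1"
  shows "\<exists>col. (\<forall>v\<in>X. col v < M) \<and>
           (\<forall>B\<in>\<B>. \<forall>j<M. \<not> B \<subseteq> {v \<in> X. col v = j \<or> col v = Suc j mod M})"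
proof (cases "\<B> = {}")
  case True
  then show ?thesis using assms(4) by (intro exI[of _ "\<lambda>_. 0"]) auto
next
  case False
  then obtain B0 where "B0 \<in> \<B>" by blast
  have fin\<B>: "finite \<B>"
    by (rule finite_subset[of _ "Pow X"]) (use edges assms(1) in auto)
  \<comment> \<open>only an \<open>s\<close>-subset of every block is looked at, which makes all the events equally likely\<close>
  have "\<forall>B\<in>\<B>. \<exists>T. T \<subseteq> B \<and> card T = s"
    using edges by (meson obtain_subset_with_card_n)
  then obtain S where S: "\<And>B. B \<in> \<B> \<Longrightarrow> S B \<subseteq> B \<and> card (S B) = s" by metis
  have S_X: "S B \<subseteq> X" and S_fin: "finite (S B)" and S_ne: "S B \<noteq> {}" if "B \<in> \<B>" for B
    using S[OF that] edges[OF that] assms(1,3) finite_subset by fastforce+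
  define \<Delta>' where "\<Delta>' = Max ((\<lambda>v. card {B \<in> \<B>. v \<in> B}) ` X)"
  have deg: "card {B \<in> \<B>. v \<in> B} \<le> \<Delta>'" if "v \<in> X" for v
    unfolding \<Delta>'_def using assms(1) that by simp
  have "X \<noteq> {}" using S_X[OF \<open>B0 \<in> \<B>\<close>] S_ne[OF \<open>B0 \<in> \<B>\<close>] by blast
  then have "\<Delta>' \<in> (\<lambda>v. card {B \<in> \<B>. v \<in> B}) ` X"
    unfolding \<Delta>'_def using assms(1) by (intro Max_in) auto
  then have "real \<Delta>' \<le> \<Delta>" using degree by auto
  have meeting: "card {B' \<in> \<B>. B' \<noteq> B \<and> S B' \<inter> S B \<noteq> {}} + 1 \<le> s * \<Delta>'" if "B \<in> \<B>" for B
  proof -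
    have "card {B' \<in> \<B>. B' \<noteq> B \<and> S B' \<inter> S B \<noteq> {}} + 1 \<le> card (S B) * \<Delta>'"
      by (rule card_edges_meeting_le[where S = S, OF fin\<B> that S_fin[OF that] S_ne[OF that]])
        (use S S_X[OF that] deg in auto)
    then show ?thesis using S[OF that] by simp
  qed
  have "1 \<le> s * \<Delta>'" using meeting[OF \<open>B0 \<in> \<B>\<close>] by linarith
  then have "real (s * \<Delta>' - 1) + 1 \<le> s * \<Delta>"
    using \<open>real \<Delta>' \<le> \<Delta>\<close> by (simp add: of_nat_diff mult_left_mono)
  moreover have "0 \<le> exp 1 * ((2 ^ s - 1) / real M ^ (s - 1))"
    by (simp add: one_le_power)
  ultimately have "exp 1 * ((2 ^ s - 1) / real M ^ (s - 1)) * (real (s * \<Delta>' - 1) + 1) \<le> 1"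
    using assms(6) by (meson mult_left_mono order_trans)
  then obtain col where "col \<in> PiE X (\<lambda>_. {..<M})"
    "\<forall>B\<in>\<B>. \<forall>j<M. \<exists>v\<in>S B. col v \<noteq> j \<and> col v \<noteq> Suc j mod M"
    using exists_colouring_not_two_consecutive_on[OF assms(1) fin\<B> assms(4), of S s "s * \<Delta>' - 1"]
      S_X S_ne S meeting by fastforce
  then show ?thesis using S by (intro exI[of _ col]) fastforce
qed

lemma card_subsets_containing:
  assumes "finite A" "v \<in> A"
  shows "card {T. T \<subseteq> A \<and> v \<in> T \<and> card T = Suc r} = (card A - 1) choose r"
proof -
  have "{T. T \<subseteq> A \<and> v \<in> T \<and> card T = Suc r} = insert v ` {U. U \<subseteq> A - {v} \<and> card U = r}"
  proof (intro equalityI subsetI)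
    fix T assume T: "T \<in> {T. T \<subseteq> A \<and> v \<in> T \<and> card T = Suc r}"
    then have "finite T" using assms(1) finite_subset by blast
    then have "T - {v} \<in> {U. U \<subseteq> A - {v} \<and> card U = r}"
      using T by auto
    then show "T \<in> insert v ` {U. U \<subseteq> A - {v} \<and> card U = r}"
      using T by (metis (no_types, lifting) image_eqI insert_Diff mem_Collect_eq)
  next
    fix T assume "T \<in> insert v ` {U. U \<subseteq> A - {v} \<and> card U = r}"
    then obtain U where U: "U \<subseteq> A - {v}" "card U = r" and T: "T = insert v U" by blast
    have "finite U" using U(1) assms(1) by (meson finite_Diff finite_subset)
    moreover have "v \<notin> U" using U(1) by blast
    ultimately show "T \<in> {T. T \<subseteq> A \<and> v \<in> T \<and> card T = Suc r}"
      using U T assms(2) by auto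
  qed
  moreover have "inj_on (insert v) {U. U \<subseteq> A - {v} \<and> card U = r}"
    by (rule inj_onI) blast
  ultimately show ?thesis
    using assms by (simp add: card_image n_subsets)
qed

lemma partial_system_degree_le:
  assumes ps: "partial_system k t lam X \<B>" and "t + 1 \<le> k" "1 \<le> t" "v \<in> X"
  shows "card {B \<in> \<B>. v \<in> B} * fact t \<le> lam * card X ^ (t - 1)"
proof -
  obtain r where t: "t = Suc r" using assms(3) by (cases t) auto
  have finX: "finite X" and blocks: "\<And>B. B \<in> \<B> \<Longrightarrow> B \<subseteq> X \<and> card B = k"
    and lam: "\<And>T. T \<subseteq> X \<Longrightarrow> card T = t \<Longrightarrow> card {B \<in> \<B>. T \<subseteq> B} \<le> lam"
    using ps unfolding partial_system_def by auto
  define Bv where "Bv = {B \<in> \<B>. v \<in> B}"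
  define Tv where "Tv = {T. T \<subseteq> X \<and> v \<in> T \<and> card T = t}"
  have fin\<B>: "finite \<B>"
    by (rule finite_subset[of _ "Pow X"]) (use blocks finX in auto)
  then have finBv: "finite Bv" unfolding Bv_def by simp
  have finTv: "finite Tv"
    unfolding Tv_def by (rule finite_subset[of _ "Pow X"]) (use finX in auto)
  have per_block: "card {T \<in> Tv. T \<subseteq> B} = (k - 1) choose r" if "B \<in> Bv" for B
  proof -
    have B: "B \<subseteq> X" "card B = k" "v \<in> B" using that blocks unfolding Bv_def by auto
    then have "{T \<in> Tv. T \<subseteq> B} = {T. T \<subseteq> B \<and> v \<in> T \<and> card T = Suc r}"
      unfolding Tv_def t by auto
    moreover have "finite B" using B(1) finX by (rule finite_subset)
    ultimately show ?thesis
      using card_subsets_containing[of B v r] B by simp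
  qed
  have per_set: "card {B \<in> Bv. T \<subseteq> B} \<le> lam" if "T \<in> Tv" for T
  proof -
    have "card {B \<in> Bv. T \<subseteq> B} \<le> card {B \<in> \<B>. T \<subseteq> B}"
      using fin\<B> unfolding Bv_def by (intro card_mono) auto
    also have "\<dots> \<le> lam" using that lam unfolding Tv_def by auto
    finally show ?thesis .
  qed
  \<comment> \<open>double counting of the pairs \<open>(B, T)\<close> with \<open>v \<in> T \<subseteq> B\<close>\<close>
  have "card Bv * ((k - 1) choose r) = (\<Sum>B\<in>Bv. card {T \<in> Tv. T \<subseteq> B})"
    using per_block by simp
  also have "\<dots> = (\<Sum>T\<in>Tv. card {B \<in> Bv. T \<subseteq> B})"
    using sum.swap_restrict[OF finBv finTv, of "\<lambda>_ _. 1::nat" "\<lambda>B T. T \<subseteq> B"] by simp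
  also have "\<dots> \<le> lam * card Tv"
    using sum_mono[of Tv _ "\<lambda>_. lam"] per_set by (simp add: mult.commute)
  also have "card Tv = (card X - 1) choose r"
    using card_subsets_containing[OF finX assms(4)] unfolding Tv_def t .
  finally have count: "card Bv * ((k - 1) choose r) \<le> lam * ((card X - 1) choose r)" .
  have "t \<le> (k - 1) choose r"
    using binomial_right_mono[of "Suc r" "k - 1" r] assms(2) t by simp
  then have "fact t \<le> ((k - 1) choose r) * fact r"
    unfolding t fact_Suc of_nat_id by (rule mult_le_mono1)
  then have "card Bv * fact t \<le> card Bv * ((k - 1) choose r) * fact r"
    by (simp add: mult.assoc)
  also have "\<dots> \<le> lam * (((card X - 1) choose r) * fact r)"
    using count by (simp add: mult_le_mono1)
  also have "\<dots> \<le> lam * card X ^ r"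
    using binomial_fact_pow[of "card X - 1" r] power_mono[of "card X - 1" "card X" r]
    by (simp add: mult_le_mono)
  finally show ?thesis unfolding Bv_def t by simp
qed

lemma card_vertices_completing_block_le:
  assumes ps: "partial_system k t lam X \<B>" and "t < k"
    and "S1 \<subseteq> X" "S2 \<subseteq> X" and Y: "Y \<inter> (S1 \<union> S2) = {}"
  shows "card {v \<in> Y. \<exists>B\<in>\<B>. v \<in> B \<and> (B - {v} \<subseteq> S1 \<or> B - {v} \<subseteq> S2)}
           \<le> lam * card {T. card T = t \<and> (T \<subseteq> S1 \<or> T \<subseteq> S2)}"
proof -
  have finX: "finite X" and blocks: "\<And>B. B \<in> \<B> \<Longrightarrow> B \<subseteq> X \<and> card B = k"
    and lam: "\<And>T. T \<subseteq> X \<Longrightarrow> card T = t \<Longrightarrow> card {B \<in> \<B>. T \<subseteq> B} \<le> lam"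
    using ps unfolding partial_system_def by auto
  have fin\<B>: "finite \<B>"
    by (rule finite_subset[of _ "Pow X"]) (use blocks finX in auto)
  define Fam where "Fam = {T. card T = t \<and> (T \<subseteq> S1 \<or> T \<subseteq> S2)}"
  define W where "W T = {v \<in> Y. \<exists>B\<in>\<B>. v \<in> B \<and> T \<subseteq> B \<and> (B - {v} \<subseteq> S1 \<or> B - {v} \<subseteq> S2)}"
    for T
  have finFam: "finite Fam"
    unfolding Fam_def by (rule finite_subset[of _ "Pow X"]) (use assms(3,4) finX in auto)
  have cover: "{v \<in> Y. \<exists>B\<in>\<B>. v \<in> B \<and> (B - {v} \<subseteq> S1 \<or> B - {v} \<subseteq> S2)} \<subseteq> (\<Union>T\<in>Fam. W T)"
  proof clarify
    fix v B assume v: "v \<in> Y" and B: "B \<in> \<B>" "v \<in> B" "B - {v} \<subseteq> S1 \<or> B - {v} \<subseteq> S2"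
    have "finite B" using blocks[OF B(1)] finX finite_subset by blast
    then have "t \<le> card (B - {v})" using blocks[OF B(1)] B(2) assms(2) by simp
    then obtain T where "T \<subseteq> B - {v}" "card T = t" by (meson obtain_subset_with_card_n)
    then show "v \<in> (\<Union>T\<in>Fam. W T)" using v B unfolding Fam_def W_def by blast
  qed
  \<comment> \<open>a block determines the vertex it completes, as the other vertices lie outside \<open>Y\<close>\<close>
  have "card (W T) \<le> lam" if T: "T \<in> Fam" for T
  proof -
    have "\<forall>v\<in>W T. \<exists>B. B \<in> \<B> \<and> v \<in> B \<and> T \<subseteq> B \<and> B - {v} \<subseteq> S1 \<union> S2"
      unfolding W_def by blast
    then obtain f where f: "\<And>v. v \<in> W T \<Longrightarrow>
        f v \<in> \<B> \<and> v \<in> f v \<and> T \<subseteq> f v \<and> f v - {v} \<subseteq> S1 \<union> S2"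
      by metis
    have "inj_on f (W T)"
    proof (rule inj_onI)
      fix v w assume v: "v \<in> W T" and w: "w \<in> W T" and "f v = f w"
      then have "w \<in> f v - {v} \<or> w = v" using f[OF w] by blast
      moreover have "w \<notin> S1 \<union> S2" using w Y unfolding W_def by auto
      ultimately show "v = w" using f[OF v] by blast
    qed
    moreover have "f ` W T \<subseteq> {B \<in> \<B>. T \<subseteq> B}" using f by auto
    ultimately have "card (W T) \<le> card {B \<in> \<B>. T \<subseteq> B}"
      using fin\<B> by (intro card_inj_on_le) auto
    also have "\<dots> \<le> lam" using T assms(3,4) lam unfolding Fam_def by auto
    finally show ?thesis .
  qed
  then have "(\<Sum>T\<in>Fam. card (W T)) \<le> lam * card Fam"
    using sum_mono[of Fam "\<lambda>T. card (W T)" "\<lambda>_. lam"] by (simp add: mult.commute)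
  then have "card (\<Union>T\<in>Fam. W T) \<le> lam * card Fam"
    using card_UN_le[OF finFam, of W] by linarith
  moreover have "finite (\<Union>T\<in>Fam. W T)"
    by (rule finite_subset[OF _ finX]) (use blocks in \<open>auto simp: W_def\<close>)
  then have "card {v \<in> Y. \<exists>B\<in>\<B>. v \<in> B \<and> (B - {v} \<subseteq> S1 \<or> B - {v} \<subseteq> S2)}
      \<le> card (\<Union>T\<in>Fam. W T)"
    using cover by (rule card_mono)
  ultimately show ?thesis unfolding Fam_def by linarith
qed

lemma card_subsets_of_two_sets:
  assumes "finite S1" "finite S2" "D \<subseteq> S1 \<inter> S2"
  shows "fact t * card {T. card T = t \<and> (T \<subseteq> S1 \<or> T \<subseteq> S2)} + card D ^ t
           \<le> card S1 ^ t + card S2 ^ t"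
proof -
  \<comment> \<open>count the \<open>t\<close>-tuples instead: each \<open>t\<close>-set is the set of \<open>fact t\<close> distinct tuples\<close>
  define Fam where "Fam = {T. card T = t \<and> (T \<subseteq> S1 \<or> T \<subseteq> S2)}"
  define tuples where "tuples S = {xs. set xs \<subseteq> S \<and> length xs = t}" for S :: "'a set"
  have finFam: "finite Fam"
    unfolding Fam_def by (rule finite_subset[of _ "Pow S1 \<union> Pow S2"]) (use assms in auto)
  have fin_tuples: "finite (tuples S1)" "finite (tuples S2)"
    unfolding tuples_def using assms(1,2) by (simp_all add: finite_lists_length_eq)
  have "(\<Union>T\<in>Fam. permutations_of_set T) \<subseteq> tuples S1 \<union> tuples S2"
    unfolding Fam_def tuples_def permutations_of_set_def by (auto simp: distinct_card)
  then have "card (\<Union>T\<in>Fam. permutations_of_set T) \<le> card (tuples S1 \<union> tuples S2)"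
    using fin_tuples by (intro card_mono) auto
  moreover have "card (\<Union>T\<in>Fam. permutations_of_set T) = fact t * card Fam"
  proof -
    have "card (\<Union>T\<in>Fam. permutations_of_set T) = (\<Sum>T\<in>Fam. card (permutations_of_set T))"
      using finFam by (intro card_UN_disjoint ballI impI finite_permutations_of_set)
        (auto simp: permutations_of_set_def)
    also have "\<dots> = (\<Sum>T\<in>Fam. fact t)"
    proof (rule sum.cong)
      fix T assume T: "T \<in> Fam"
      then have "finite T" unfolding Fam_def using assms(1,2) finite_subset by blast
      then show "card (permutations_of_set T) = fact t" using T unfolding Fam_def by simp
    qed simp
    finally show ?thesis by simp
  qed
  moreover have "card (tuples S1) + card (tuples S2)
      = card (tuples S1 \<union> tuples S2) + card (tuples S1 \<inter> tuples S2)"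
    using fin_tuples by (rule card_Un_Int)
  moreover have "card (tuples D) \<le> card (tuples S1 \<inter> tuples S2)"
    using fin_tuples assms(3) unfolding tuples_def by (intro card_mono) auto
  ultimately have "fact t * card Fam + card (tuples D) \<le> card (tuples S1) + card (tuples S2)"
    by linarith
  moreover have "card (tuples S) = card S ^ t" if "finite S" for S
    unfolding tuples_def using that by (rule card_lists_length_eq)
  moreover have "finite D" using assms(1,3) finite_subset by blast
  ultimately show ?thesis using assms(1,2) unfolding Fam_def by simp
qed

lemma power_add_diff_mono:
  fixes a b h :: real
  assumes "0 \<le> a" "a \<le> b" "0 \<le> h"
  shows "(a + h) ^ n - a ^ n \<le> (b + h) ^ n - b ^ n"
proof (induction n)
  case (Suc n)
  have split: "(x + h) ^ Suc n - x ^ Suc n = (x + h) * ((x + h) ^ n - x ^ n) + h * x ^ n" for x :: real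
    by (simp add: right_diff_distrib distrib_right)
  have "0 \<le> (a + h) ^ n - a ^ n" using assms by (simp add: power_mono)
  then have "(a + h) * ((a + h) ^ n - a ^ n) \<le> (b + h) * ((b + h) ^ n - b ^ n)"
    using Suc.IH assms by (intro mult_mono) auto
  moreover have "h * a ^ n \<le> h * b ^ n" using assms by (intro mult_left_mono power_mono) auto
  ultimately show ?case unfolding split by linarith
qed simp

lemma power_sum_three_le:
  fixes p q d l :: real
  assumes "0 \<le> p" "p \<le> l" "0 \<le> q" "q \<le> l" "0 \<le> d" "d \<le> l"
  shows "(p + d) ^ n + (q + d) ^ n - d ^ n \<le> (2 ^ (n + 1) - 1) * l ^ n"
proof -
  have "0 \<le> l" using assms by linarith
  have "(p + d) ^ n \<le> (l + d) ^ n" "(q + d) ^ n \<le> (l + d) ^ n" "(l + d) ^ n \<le> (l + l) ^ n"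
    using assms by (intro power_mono; linarith)+
  moreover have "(l + d) ^ n - d ^ n \<le> (l + l) ^ n - l ^ n"
    using power_add_diff_mono[OF assms(5,6) \<open>0 \<le> l\<close>] by (simp only: add.commute)
  moreover have "(l + l) ^ n = 2 ^ n * l ^ n"
    by (metis mult_2 power_mult_distrib)
  moreover have "(2 ^ (n + 1) - 1) * l ^ n = 2 * (2 ^ n * l ^ n) - l ^ n"
    by (simp add: left_diff_distrib)
  ultimately show ?thesis by linarith
qed

lemma fact_card_subsets_of_two_unions_le:
  assumes "finite P" "finite D" "finite Q" "card P \<le> l" "card D \<le> l" "card Q \<le> l"
  shows "fact t * real (card {T. card T = t \<and> (T \<subseteq> P \<union> D \<or> T \<subseteq> D \<union> Q)})
           \<le> (2 ^ (t + 1) - 1) * real l ^ t"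
proof -
  let ?Fam = "{T. card T = t \<and> (T \<subseteq> P \<union> D \<or> T \<subseteq> D \<union> Q)}"
  have "fact t * card ?Fam + card D ^ t \<le> card (P \<union> D) ^ t + card (D \<union> Q) ^ t"
    using assms(1-3) by (intro card_subsets_of_two_sets) auto
  then have "real (fact t * card ?Fam + card D ^ t) \<le> real (card (P \<union> D) ^ t + card (D \<union> Q) ^ t)"
    by (simp only: of_nat_le_iff)
  then have "fact t * real (card ?Fam) + real (card D) ^ t
      \<le> real (card (P \<union> D)) ^ t + real (card (D \<union> Q)) ^ t"
    by simp
  moreover have "card (P \<union> D) \<le> card P + card D" "card (D \<union> Q) \<le> card Q + card D"
    using card_Un_le[of P D] card_Un_le[of D Q] by linarith+
  then have "real (card (P \<union> D)) ^ t \<le> (real (card P) + real (card D)) ^ t"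
    "real (card (D \<union> Q)) ^ t \<le> (real (card Q) + real (card D)) ^ t"
    by (intro power_mono; simp)+
  moreover have "(real (card P) + card D) ^ t + (real (card Q) + card D) ^ t - real (card D) ^ t
      \<le> (2 ^ (t + 1) - 1) * real l ^ t"
    using assms(4-6) by (intro power_sum_three_le) auto
  ultimately show ?thesis by linarith
qed

lemma window_within_consecutive_pieces:
  assumes "\<forall>Q\<in>set Qs. l \<le> length Q" "1 \<le> l" "i + l \<le> length (concat Qs)"
  shows "\<exists>c < length Qs. set (take l (drop i (concat Qs))) \<subseteq> set (Qs ! c)
      \<or> Suc c < length Qs \<and> set (take l (drop i (concat Qs))) \<subseteq>
            set (drop (length (Qs ! c) - (l - 1)) (Qs ! c)) \<union> set (take (l - 1) (Qs ! Suc c))"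
  using assms
proof (induction Qs arbitrary: i)
  case (Cons Q R)
  show ?case
  proof (cases "length Q \<le> i")
    case True
    then have "drop i (concat (Q # R)) = drop (i - length Q) (concat R)" by simp
    moreover obtain c where "c < length R" "set (take l (drop (i - length Q) (concat R))) \<subseteq> set (R ! c)
      \<or> Suc c < length R \<and> set (take l (drop (i - length Q) (concat R))) \<subseteq>
            set (drop (length (R ! c) - (l - 1)) (R ! c)) \<union> set (take (l - 1) (R ! Suc c))"
      using Cons.prems True by (atomize_elim, intro Cons.IH) auto
    ultimately show ?thesis by (intro exI[of _ "Suc c"]) auto
  next
    case False
    show ?thesis
    proof (cases "i + l \<le> length Q")
      case True
      then have "set (take l (drop i (concat (Q # R)))) \<subseteq> set Q"
        by (simp add: set_drop_subset[THEN subset_trans[OF set_take_subset]])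
      then show ?thesis by (intro exI[of _ 0]) auto
    next
      case False2: False
      obtain Q' R' where R: "R = Q' # R'" using Cons.prems(3) False2 by (cases R) auto
      have "l \<le> length Q'" using Cons.prems R by auto
      then have "take l (drop i (concat (Q # R))) = drop i Q @ take (l - (length Q - i)) Q'"
        using False False2 R by simp
      moreover have "set (drop i Q) \<subseteq> set (drop (length Q - (l - 1)) Q)"
        by (rule set_drop_subset_set_drop) (use False2 in auto)
      moreover have "set (take (l - (length Q - i)) Q') \<subseteq> set (take (l - 1) Q')"
        by (rule set_take_subset_set_take) (use False in auto)
      ultimately show ?thesis using R by (intro exI[of _ 0]) auto
    qed
  qed
qed simp

lemma take_filter_eq_take:
  "\<forall>x\<in>set (take m ys). P x \<Longrightarrow> take m (filter P ys) = take m ys"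
  by (induction ys arbitrary: m) (auto simp: take_Cons split: nat.splits)

lemma set_drop_filter_eq_set_drop:
  assumes "\<forall>x\<in>set (drop (length ys - m) ys). P x"
  shows "set (drop (length (filter P ys) - m) (filter P ys)) = set (drop (length ys - m) ys)"
proof -
  have "\<forall>x\<in>set (take m (rev ys)). P x" using assms by (simp add: take_rev)
  then have "take m (rev (filter P ys)) = take m (rev ys)"
    by (simp add: rev_filter take_filter_eq_take)
  then show ?thesis by (metis set_rev take_rev)
qed

lemma card_set_take_Un_set_drop_ge:
  assumes "distinct ys" "l \<le> length ys" "2 \<le> l"
  shows "l \<le> card (set (take (l - 1) ys) \<union> set (drop (length ys - (l - 1)) ys))"
proof (cases "length ys \<le> 2 * (l - 1)")
  case True
  then have "set (drop (l - 1) ys) \<subseteq> set (drop (length ys - (l - 1)) ys)"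
    by (intro set_drop_subset_set_drop) simp
  then have "set ys \<subseteq> set (take (l - 1) ys) \<union> set (drop (length ys - (l - 1)) ys)"
    by (metis append_take_drop_id set_append Un_mono subset_refl)
  then have "card (set ys) \<le> card (set (take (l - 1) ys) \<union> set (drop (length ys - (l - 1)) ys))"
    by (intro card_mono) auto
  then show ?thesis using assms(1,2) by (simp add: distinct_card)
next
  case False
  then have "set (take (l - 1) ys) \<inter> set (drop (length ys - (l - 1)) ys) = {}"
    by (intro set_take_disj_set_drop_if_distinct[OF assms(1)]) simp
  then have "card (set (take (l - 1) ys) \<union> set (drop (length ys - (l - 1)) ys)) = 2 * (l - 1)"
    using assms(1,2) by (simp add: card_Un_disjoint distinct_card)
  then show ?thesis using assms(3) by simp
qed

lemma distinct_concat_map_upt: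
  assumes "\<And>c. c < M \<Longrightarrow> distinct (L c)"
    and "\<And>c c'. c < M \<Longrightarrow> c' < M \<Longrightarrow> c \<noteq> c' \<Longrightarrow> set (L c) \<inter> set (L c') = {}"
  shows "distinct (concat (map L [0..<M]))"
  using assms
proof (induction M)
  case (Suc M)
  have "set (L c) \<inter> set (L M) = {}" if "c < M" for c
    using Suc.prems(2)[of c M] that by simp
  then have "set (concat (map L [0..<M])) \<inter> set (L M) = {}"
    by (auto simp: disjoint_iff)
  with Suc show ?case by simp
qed simp

lemma independent_set_subset: "independent_set \<B> Z \<Longrightarrow> Y \<subseteq> Z \<Longrightarrow> independent_set \<B> Y"
  unfolding independent_set_def by blast

lemma independent_set_insert:
  assumes "independent_set \<B> Y" "\<And>B. B \<in> \<B> \<Longrightarrow> v \<in> B \<Longrightarrow> \<not> B - {v} \<subseteq> Y"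
  shows "independent_set \<B> (insert v Y)"
  using assms unfolding independent_set_def by blast

lemma cyclic_window_eq_set_take_drop:
  assumes "i < length xs" "l \<le> length xs"
  shows "(\<lambda>j. xs ! ((i + j) mod length xs)) ` {0..<l} = set (take l (drop i (xs @ xs)))"
proof -
  have "set (take l (drop i (xs @ xs))) = (\<lambda>j. drop i (xs @ xs) ! j) ` {0..<l}"
    using assms by (simp add: nth_image)
  also have "\<dots> = (\<lambda>j. xs ! ((i + j) mod length xs)) ` {0..<l}"
  proof (rule image_cong)
    fix j assume "j \<in> {0..<l}"
    then show "drop i (xs @ xs) ! j = xs ! ((i + j) mod length xs)"
      using assms by (cases "i + j < length xs") (auto simp: nth_append le_mod_geq add.commute)
  qed simp
  finally show ?thesis by simp
qed

lemma cyclically_good_concat: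
  fixes L :: "nat \<Rightarrow> 'a list"
  assumes "1 \<le> M" "1 \<le> l"
    and long: "\<And>c. c < M \<Longrightarrow> l \<le> length (L c)"
    and inside: "\<And>c. c < M \<Longrightarrow> independent_set \<B> (set (L c))"
    and across: "\<And>c. c < M \<Longrightarrow> independent_set \<B>
        (set (drop (length (L c) - (l - 1)) (L c)) \<union> set (take (l - 1) (L (Suc c mod M))))"
  shows "cyclically_good (length (concat (map L [0..<M]))) \<B> (nth (concat (map L [0..<M]))) l"
  unfolding cyclically_good_def
proof (intro allI impI, elim conjE)
  fix S
  define xs where "xs = concat (map L [0..<M])"
  assume "card S = l" "cyc_consecutive (length (concat (map L [0..<M]))) (nth (concat (map L [0..<M]))) S"
  then obtain i where i: "i < length xs" and S: "S = (\<lambda>j. xs ! ((i + j) mod length xs)) ` {0..<l}"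
    unfolding cyc_consecutive_def xs_def by auto
  have "l \<le> length (L 0)" using long assms(1) by simp
  also have "\<dots> \<le> length xs"
    using assms(1) unfolding xs_def by (simp add: upt_conv_Cons)
  finally have "l \<le> length xs" .
  then have S_window: "S = set (take l (drop i (xs @ xs)))"
    using cyclic_window_eq_set_take_drop[OF i] S by simp
  \<comment> \<open>unrolling the cycle once turns the cyclic window into an ordinary one\<close>
  let ?Qs = "map L [0..<M] @ map L [0..<M]"
  have Qs_nth: "?Qs ! c = L (c mod M)" if "c < 2 * M" for c
    using that by (cases "c < M") (auto simp: nth_append le_mod_geq)
  have "\<forall>Q\<in>set ?Qs. l \<le> length Q" using long by auto
  moreover have concat_Qs: "concat ?Qs = xs @ xs" unfolding xs_def by simp
  moreover have "i + l \<le> length (xs @ xs)" using i \<open>l \<le> length xs\<close> by simp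
  ultimately obtain c where c: "c < length ?Qs" and
    "S \<subseteq> set (?Qs ! c) \<or> Suc c < length ?Qs \<and> S \<subseteq>
       set (drop (length (?Qs ! c) - (l - 1)) (?Qs ! c)) \<union> set (take (l - 1) (?Qs ! Suc c))"
    using window_within_consecutive_pieces[of ?Qs l i] assms(2)
    unfolding concat_Qs S_window[symmetric] by blast
  moreover have "Suc c mod M = Suc (c mod M) mod M" by (simp add: mod_Suc_eq)
  ultimately consider "S \<subseteq> set (L (c mod M))"
    | "S \<subseteq> set (drop (length (L (c mod M)) - (l - 1)) (L (c mod M)))
             \<union> set (take (l - 1) (L (Suc (c mod M) mod M)))"
    using Qs_nth[of c] Qs_nth[of "Suc c"] c by (auto simp: mult_2)
  moreover have "c mod M < M" using assms(1) by simp
  ultimately show "independent_set \<B> S"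
    by cases (use inside across independent_set_subset in blast)+
qed

locale cyclic_colouring =
  fixes X :: "'a set" and \<B> :: "'a set set" and M l :: nat and col :: "'a \<Rightarrow> nat"
  assumes finite_X: "finite X"
    and col_less: "\<And>v. v \<in> X \<Longrightarrow> col v < M"
    and M_ge_2: "2 \<le> M" and l_ge_2: "2 \<le> l"
    and consecutive_classes_independent:
      "\<And>c. c < M \<Longrightarrow> independent_set \<B> {v \<in> X. col v = c \<or> col v = Suc c mod M}"
begin

definition colour_class :: "nat \<Rightarrow> 'a set" where
  "colour_class c = {v \<in> X. col v = c}"

definition big :: "nat \<Rightarrow> bool" where
  "big c \<longleftrightarrow> l \<le> card (colour_class c)"

definition enum :: "nat \<Rightarrow> 'a list" where
  "enum c = (SOME zs. distinct zs \<and> set zs = colour_class c)"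

definition head_part :: "nat \<Rightarrow> 'a set" where
  "head_part c = set (take (l - 1) (enum c))"

definition tail_part :: "nat \<Rightarrow> 'a set" where
  "tail_part c = set (drop (card (colour_class c) - (l - 1)) (enum c))"

text \<open>The vertices of big classes that lie in neither of the two end parts: they may be moved
  into the pieces of small classes, which are padded up to size \<open>l\<close> in this way.\<close>

definition reserve :: "'a set" where
  "reserve = {v \<in> X. big (col v) \<and> v \<notin> head_part (col v) \<union> tail_part (col v)}"

definition piece :: "(nat \<Rightarrow> 'a set) \<Rightarrow> nat \<Rightarrow> 'a set" where
  "piece A c = colour_class c \<union> A c"

definition left_end :: "(nat \<Rightarrow> 'a set) \<Rightarrow> nat \<Rightarrow> 'a set" where
  "left_end A c = (if big c then head_part c else piece A c)"

definition right_end :: "(nat \<Rightarrow> 'a set) \<Rightarrow> nat \<Rightarrow> 'a set" where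
  "right_end A c = (if big c then tail_part c else piece A c)"

definition used :: "(nat \<Rightarrow> 'a set) \<Rightarrow> 'a set" where
  "used A = (\<Union>c<M. A c)"

definition admissible :: "(nat \<Rightarrow> 'a set) \<Rightarrow> bool" where
  "admissible A \<longleftrightarrow> (\<forall>c. A c \<subseteq> reserve) \<and> (\<forall>c. A c \<noteq> {} \<longrightarrow> c < M \<and> \<not> big c) \<and>
     (\<forall>c c'. c \<noteq> c' \<longrightarrow> A c \<inter> A c' = {}) \<and> (\<forall>c<M. \<not> big c \<longrightarrow> card (piece A c) \<le> l) \<and>
     (\<forall>c<M. independent_set \<B> (right_end A c \<union> left_end A (Suc c mod M)))"

lemma enum: "distinct (enum c)" "set (enum c) = colour_class c"
proof -
  have "finite (colour_class c)" using finite_X unfolding colour_class_def by simp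
  then have "\<exists>zs. distinct zs \<and> set zs = colour_class c" using finite_distinct_list by blast
  then show "distinct (enum c)" "set (enum c) = colour_class c"
    unfolding enum_def by (metis (mono_tags, lifting) someI_ex)+
qed

lemma length_enum: "length (enum c) = card (colour_class c)"
  using enum distinct_card by metis

lemma head_part_subset: "head_part c \<subseteq> colour_class c"
  unfolding head_part_def using enum(2) set_take_subset by metis

lemma tail_part_subset: "tail_part c \<subseteq> colour_class c"
  unfolding tail_part_def using enum(2) set_drop_subset by metis

lemma card_head_part: "card (head_part c) \<le> l - 1"
  unfolding head_part_def by (metis card_length length_take min.bounded_iff order.trans nle_le)

lemma card_tail_part: "card (tail_part c) \<le> l - 1"
proof -
  have "card (tail_part c) \<le> length (drop (card (colour_class c) - (l - 1)) (enum c))"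
    unfolding tail_part_def by (rule card_length)
  then show ?thesis by (simp add: length_enum)
qed

lemma reserve_subset: "reserve \<subseteq> X"
  unfolding reserve_def by auto

lemma admissible_empty: "admissible (\<lambda>_. {})"
  unfolding admissible_def
proof (intro conjI allI impI)
  fix c assume "c < M"
  have "right_end (\<lambda>_. {}) c \<union> left_end (\<lambda>_. {}) (Suc c mod M)
      \<subseteq> {v \<in> X. col v = c \<or> col v = Suc c mod M}"
    using tail_part_subset[of c] head_part_subset[of "Suc c mod M"]
    unfolding right_end_def left_end_def piece_def colour_class_def by auto
  then show "independent_set \<B> (right_end (\<lambda>_. {}) c \<union> left_end (\<lambda>_. {}) (Suc c mod M))"
    using consecutive_classes_independent[OF \<open>c < M\<close>] by (rule independent_set_subset[rotated])
qed (auto simp: piece_def big_def)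

lemma unused_reserve_notin_ends:
  assumes "admissible A" "v \<in> reserve - used A"
  shows "v \<notin> right_end A c" "v \<notin> left_end A c" "\<not> big c \<Longrightarrow> v \<notin> piece A c"
proof -
  have "v \<notin> A c"
    using assms unfolding admissible_def used_def by (cases "c < M") auto
  moreover have "v \<notin> head_part c" "v \<notin> tail_part c" "\<not> big c \<Longrightarrow> v \<notin> colour_class c"
    using assms(2) head_part_subset[of c] tail_part_subset[of c]
    unfolding reserve_def colour_class_def by auto
  ultimately show "v \<notin> right_end A c" "v \<notin> left_end A c" "\<not> big c \<Longrightarrow> v \<notin> piece A c"
    unfolding right_end_def left_end_def piece_def by auto
qed

lemma card_ends_le:
  assumes "admissible A" "c < M"
  shows "card (right_end A c) \<le> l" "card (left_end A c) \<le> l"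
  using assms card_head_part[of c] card_tail_part[of c]
  unfolding admissible_def right_end_def left_end_def by auto

lemma card_unused_reserve_ge:
  assumes "admissible A"
  shows "card X \<le> card (reserve - used A) + M * (2 * l - 2)"
proof -
  define R where "R c = (if big c then head_part c \<union> tail_part c else piece A c)" for c
  have "X \<subseteq> (reserve - used A) \<union> (\<Union>c<M. R c)"
  proof
    fix v assume v: "v \<in> X"
    show "v \<in> (reserve - used A) \<union> (\<Union>c<M. R c)"
    proof (cases "v \<in> reserve - used A")
      case False
      then consider "\<not> big (col v) \<or> v \<in> head_part (col v) \<union> tail_part (col v)"
        | c where "c < M" "v \<in> A c"
        using v unfolding reserve_def used_def by auto
      then show ?thesis
      proof cases
        case 1
        then have "v \<in> R (col v)" using v unfolding R_def piece_def colour_class_def by auto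
        then show ?thesis using col_less[OF v] by auto
      next
        case 2
        then have "v \<in> R c" using assms unfolding admissible_def R_def piece_def by auto
        then show ?thesis using \<open>c < M\<close> by auto
      qed
    qed simp
  qed
  moreover have "finite ((reserve - used A) \<union> (\<Union>c<M. R c))"
  proof (rule finite_subset[OF _ finite_X])
    have "A c \<subseteq> X" for c using assms reserve_subset unfolding admissible_def by blast
    then have "R c \<subseteq> X" for c
      using head_part_subset[of c] tail_part_subset[of c]
      unfolding R_def piece_def colour_class_def by auto
    then show "(reserve - used A) \<union> (\<Union>c<M. R c) \<subseteq> X"
      using reserve_subset by blast
  qed
  ultimately have "card X \<le> card ((reserve - used A) \<union> (\<Union>c<M. R c))"
    by (rule card_mono[rotated])
  also have "\<dots> \<le> card (reserve - used A) + card (\<Union>c<M. R c)"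
    by (rule card_Un_le)
  also have "card (\<Union>c<M. R c) \<le> (\<Sum>c<M. card (R c))"
    by (rule card_UN_le) simp
  also have "\<dots> \<le> (\<Sum>c<M. 2 * l - 2)"
  proof (rule sum_mono)
    fix c assume "c \<in> {..<M}"
    show "card (R c) \<le> 2 * l - 2"
    proof (cases "big c")
      case True
      then show ?thesis
        using card_Un_le[of "head_part c" "tail_part c"] card_head_part[of c] card_tail_part[of c]
        unfolding R_def by simp
    next
      case False
      then show ?thesis
        using assms \<open>c \<in> {..<M}\<close> l_ge_2 unfolding R_def admissible_def by auto
    qed
  qed
  finally show ?thesis by simp
qed

lemma ends_subset:
  assumes "admissible A"
  shows "piece A c \<subseteq> X" "right_end A c \<subseteq> X" "left_end A c \<subseteq> X"
proof -
  show "piece A c \<subseteq> X"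
    using assms reserve_subset unfolding admissible_def piece_def colour_class_def by blast
  then show "right_end A c \<subseteq> X" "left_end A c \<subseteq> X"
    using head_part_subset[of c] tail_part_subset[of c]
    unfolding right_end_def left_end_def colour_class_def by auto
qed

lemma used_subset:
  assumes "admissible A"
  shows "used A \<subseteq> reserve"
  using assms unfolding admissible_def used_def by blast

lemma used_insert:
  assumes "c0 < M"
  shows "used (A(c0 := insert v (A c0))) = insert v (used A)"
proof -
  have "(\<Union>c<M. (A(c0 := insert v (A c0))) c) = (\<Union>c<M. A c) \<union> {v}"
    using assms by (auto split: if_splits)
  then show ?thesis unfolding used_def by simp
qed

lemma pred_mod_eq:
  assumes "c < M" "Suc c mod M = c0"
  shows "c = (c0 + M - 1) mod M"
proof (cases "Suc c < M")
  case False
  then have "Suc c = M" using assms(1) by simp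
  then show ?thesis using assms(2) by auto
qed (use assms in auto)

lemma ends_fun_upd:
  assumes "c \<noteq> c0"
  shows "right_end (A(c0 := Z)) c = right_end A c" "left_end (A(c0 := Z)) c = left_end A c"
    "piece (A(c0 := Z)) c = piece A c"
  using assms unfolding right_end_def left_end_def piece_def by auto

lemma ends_insert_small:
  assumes "\<not> big c0"
  shows "right_end (A(c0 := insert v (A c0))) c0 = insert v (piece A c0)"
    "left_end (A(c0 := insert v (A c0))) c0 = insert v (piece A c0)"
    "right_end A c0 = piece A c0" "left_end A c0 = piece A c0"
  using assms unfolding right_end_def left_end_def piece_def by auto

lemma junction_independent_insert:
  assumes adm: "admissible A" and c0: "c0 < M" "\<not> big c0" and "c < M"
    and free: "\<And>B. B \<in> \<B> \<Longrightarrow> v \<in> B \<Longrightarrow>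
      \<not> B - {v} \<subseteq> right_end A ((c0 + M - 1) mod M) \<union> piece A c0 \<and>
      \<not> B - {v} \<subseteq> piece A c0 \<union> left_end A (Suc c0 mod M)"
  shows "independent_set \<B> (right_end (A(c0 := insert v (A c0))) c
           \<union> left_end (A(c0 := insert v (A c0))) (Suc c mod M))"
proof -
  let ?A = "A(c0 := insert v (A c0))"
  have old: "independent_set \<B> (right_end A c \<union> left_end A (Suc c mod M))"
    using adm \<open>c < M\<close> unfolding admissible_def by blast
  have "Suc c0 mod M \<noteq> c0" using c0(1) M_ge_2 by (cases "Suc c0 = M") auto
  consider "c = c0" | "c \<noteq> c0" "Suc c mod M = c0" | "c \<noteq> c0" "Suc c mod M \<noteq> c0" by blast
  then show ?thesis
  proof cases
    case 1
    then have "right_end ?A c \<union> left_end ?A (Suc c mod M)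
        = insert v (right_end A c \<union> left_end A (Suc c mod M))"
      using ends_insert_small[OF c0(2)] ends_fun_upd[OF \<open>Suc c0 mod M \<noteq> c0\<close>] by auto
    then show ?thesis
      using independent_set_insert[OF old] free 1 ends_insert_small[OF c0(2)] by auto
  next
    case 2
    then have "c = (c0 + M - 1) mod M" using pred_mod_eq \<open>c < M\<close> by blast
    moreover have "right_end ?A c \<union> left_end ?A (Suc c mod M)
        = insert v (right_end A c \<union> left_end A (Suc c mod M))"
      using 2 ends_insert_small[OF c0(2)] ends_fun_upd[OF 2(1)] by auto
    ultimately show ?thesis
      using independent_set_insert[OF old] free 2 ends_insert_small[OF c0(2)] by auto
  next
    case 3
    then show ?thesis using old ends_fun_upd[OF 3(1)] ends_fun_upd[OF 3(2)] by simp
  qed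
qed

lemma admissible_insert:
  assumes adm: "admissible A" and c0: "c0 < M" "\<not> big c0" "card (piece A c0) < l"
    and v: "v \<in> reserve - used A"
    and free: "\<And>B. B \<in> \<B> \<Longrightarrow> v \<in> B \<Longrightarrow>
      \<not> B - {v} \<subseteq> right_end A ((c0 + M - 1) mod M) \<union> piece A c0 \<and>
      \<not> B - {v} \<subseteq> piece A c0 \<union> left_end A (Suc c0 mod M)"
  shows "admissible (A(c0 := insert v (A c0)))"
proof -
  let ?A = "A(c0 := insert v (A c0))"
  have v_notin: "v \<notin> A c" for c
    using v adm unfolding admissible_def used_def by (cases "c < M") auto
  have "finite (piece A c0)" using ends_subset(1)[OF adm] finite_X by (rule finite_subset)
  then have card_c0: "card (piece ?A c0) \<le> l" using c0(3) unfolding piece_def by (simp add: card_insert_if)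
  show ?thesis
    unfolding admissible_def
  proof (intro conjI allI impI)
    fix c show "?A c \<subseteq> reserve" using adm v unfolding admissible_def by auto
  next
    fix c assume "?A c \<noteq> {}"
    then show "c < M" using adm c0 unfolding admissible_def by (cases "c = c0") auto
  next
    fix c assume "?A c \<noteq> {}"
    then show "\<not> big c" using adm c0 unfolding admissible_def by (cases "c = c0") auto
  next
    fix c c' :: nat assume "c \<noteq> c'"
    then show "?A c \<inter> ?A c' = {}" using adm v_notin unfolding admissible_def by auto
  next
    fix c assume "c < M" "\<not> big c"
    then show "card (piece ?A c) \<le> l"
      using card_c0 ends_fun_upd(3) adm unfolding admissible_def by (cases "c = c0") auto
  next
    fix c assume "c < M"
    then show "independent_set \<B> (right_end ?A c \<union> left_end ?A (Suc c mod M))"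
      using junction_independent_insert[OF adm c0(1,2)] free by blast
  qed
qed

lemma exists_admissible_insert:
  assumes ps: "partial_system k t lam X \<B>" and "t < k"
    and room: "real lam * (2 ^ (t + 1) - 1) * real l ^ t / fact t + real (M * (2 * l - 2))
      < real (card X)"
    and adm: "admissible A" and c0: "c0 < M" "\<not> big c0" "card (piece A c0) < l"
  shows "\<exists>v \<in> reserve - used A. admissible (A(c0 := insert v (A c0)))"
proof -
  let ?P = "right_end A ((c0 + M - 1) mod M)" and ?D = "piece A c0"
    and ?Q = "left_end A (Suc c0 mod M)"
  define W where "W = {v \<in> reserve - used A.
    \<exists>B\<in>\<B>. v \<in> B \<and> (B - {v} \<subseteq> ?P \<union> ?D \<or> B - {v} \<subseteq> ?D \<union> ?Q)}"
  define Fam where "Fam = {T. card T = t \<and> (T \<subseteq> ?P \<union> ?D \<or> T \<subseteq> ?D \<union> ?Q)}"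
  have "(reserve - used A) \<inter> ((?P \<union> ?D) \<union> (?D \<union> ?Q)) = {}"
    using unused_reserve_notin_ends[OF adm] c0(2) by blast
  then have "card W \<le> lam * card Fam"
    unfolding W_def Fam_def using ends_subset[OF adm]
    by (intro card_vertices_completing_block_le[OF ps \<open>t < k\<close>]) auto
  have "finite ?P" "finite ?D" "finite ?Q"
    using ends_subset[OF adm] finite_X by (meson finite_subset)+
  then have "fact t * real (card Fam) \<le> (2 ^ (t + 1) - 1) * real l ^ t"
    unfolding Fam_def using card_ends_le[OF adm] c0 M_ge_2
    by (intro fact_card_subsets_of_two_unions_le) auto
  then have "real (card Fam) \<le> (2 ^ (t + 1) - 1) * real l ^ t / fact t"
    by (simp add: pos_le_divide_eq mult.commute)
  then have "real lam * real (card Fam) \<le> real lam * ((2 ^ (t + 1) - 1) * real l ^ t / fact t)"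
    by (rule mult_left_mono) simp
  moreover have "real (card W) \<le> real lam * real (card Fam)"
    using \<open>card W \<le> lam * card Fam\<close> by (simp only: of_nat_mult[symmetric] of_nat_le_iff)
  ultimately have "real (card W) \<le> real lam * (2 ^ (t + 1) - 1) * real l ^ t / fact t"
    by simp
  also have "\<dots> < card (reserve - used A)"
    using room card_unused_reserve_ge[OF adm] by linarith
  finally have "card W < card (reserve - used A)" by simp
  moreover have "W \<subseteq> reserve - used A" unfolding W_def by blast
  ultimately have "\<not> reserve - used A \<subseteq> W" by (metis less_irrefl subset_antisym)
  then obtain v where v: "v \<in> reserve - used A" "v \<notin> W" by blast
  moreover have "\<not> B - {v} \<subseteq> ?P \<union> ?D \<and> \<not> B - {v} \<subseteq> ?D \<union> ?Q"
    if "B \<in> \<B>" "v \<in> B" for B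
    using v that unfolding W_def by simp
  ultimately have "admissible (A(c0 := insert v (A c0)))"
    by (intro admissible_insert[OF adm c0])
  then show ?thesis using v by blast
qed

lemma exists_complete_admissible:
  assumes ps: "partial_system k t lam X \<B>" and "t < k"
    and room: "real lam * (2 ^ (t + 1) - 1) * real l ^ t / fact t + real (M * (2 * l - 2))
      < real (card X)"
  shows "\<exists>A. admissible A \<and> (\<forall>c<M. \<not> big c \<longrightarrow> card (piece A c) = l)"
proof -
  have "\<exists>A'. admissible A' \<and> (\<forall>c<M. \<not> big c \<longrightarrow> card (piece A' c) = l)" if "admissible A" for A
    using that
  proof (induction "card X - card (used A)" arbitrary: A rule: less_induct)
    case less
    show ?case
    proof (cases "\<forall>c<M. \<not> big c \<longrightarrow> card (piece A c) = l")
      case False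
      then obtain c0 where "c0 < M" "\<not> big c0" "card (piece A c0) \<noteq> l" by blast
      moreover have "card (piece A c0) \<le> l"
        using less.prems \<open>c0 < M\<close> \<open>\<not> big c0\<close> unfolding admissible_def by blast
      ultimately have c0: "c0 < M" "\<not> big c0" "card (piece A c0) < l" by auto
      then obtain v where v: "v \<in> reserve - used A"
        and adm: "admissible (A(c0 := insert v (A c0)))"
        using exists_admissible_insert[OF ps \<open>t < k\<close> room less.prems] by blast
      have "used (A(c0 := insert v (A c0))) = insert v (used A)"
        using c0(1) by (rule used_insert)
      moreover have "insert v (used A) \<subseteq> X"
        using used_subset[OF less.prems] v reserve_subset by blast
      then have "card (insert v (used A)) \<le> card X" "finite (used A)"
        using finite_X by (auto intro: card_mono finite_subset[of _ X])
      ultimately have "card X - card (used (A(c0 := insert v (A c0)))) < card X - card (used A)"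
        using v by simp
      then show ?thesis using less.hyps adm by blast
    qed (use less.prems in blast)
  qed
  then show ?thesis using admissible_empty by blast
qed

definition arrangement :: "(nat \<Rightarrow> 'a set) \<Rightarrow> nat \<Rightarrow> 'a list" where
  "arrangement A c = (if big c then filter (\<lambda>v. v \<notin> used A) (enum c)
     else (SOME zs. distinct zs \<and> set zs = piece A c))"

context
  fixes A assumes adm: "admissible A"
begin

lemma arrangement:
  "distinct (arrangement A c)"
  "set (arrangement A c) = (if big c then colour_class c - used A else piece A c)"
proof -
  have "finite (piece A c)" using ends_subset(1)[OF adm] finite_X by (rule finite_subset)
  then have "\<exists>zs. distinct zs \<and> set zs = piece A c" using finite_distinct_list by blast
  then have "distinct (SOME zs. distinct zs \<and> set zs = piece A c)"
    "set (SOME zs. distinct zs \<and> set zs = piece A c) = piece A c"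
    by (metis (mono_tags, lifting) someI_ex)+
  then show "distinct (arrangement A c)"
    "set (arrangement A c) = (if big c then colour_class c - used A else piece A c)"
    unfolding arrangement_def using enum by auto
qed

lemma end_parts_disjoint_used: "(head_part c \<union> tail_part c) \<inter> used A = {}"
  using used_subset[OF adm] head_part_subset[of c] tail_part_subset[of c]
  unfolding reserve_def colour_class_def by blast

lemma set_take_arrangement: "set (take (l - 1) (arrangement A c)) \<subseteq> left_end A c"
proof (cases "big c")
  case True
  have "\<forall>v\<in>set (take (l - 1) (enum c)). v \<notin> used A"
    using end_parts_disjoint_used unfolding head_part_def by blast
  then have "take (l - 1) (arrangement A c) = take (l - 1) (enum c)"
    using True unfolding arrangement_def by (simp add: take_filter_eq_take)
  then show ?thesis using True unfolding left_end_def head_part_def by simp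
next
  case False
  then show ?thesis using arrangement(2) set_take_subset unfolding left_end_def by metis
qed

lemma set_drop_arrangement:
  "set (drop (length (arrangement A c) - (l - 1)) (arrangement A c)) \<subseteq> right_end A c"
proof (cases "big c")
  case True
  have "\<forall>v\<in>set (drop (length (enum c) - (l - 1)) (enum c)). v \<notin> used A"
    using end_parts_disjoint_used unfolding tail_part_def length_enum by blast
  then have "set (drop (length (arrangement A c) - (l - 1)) (arrangement A c))
      = set (drop (length (enum c) - (l - 1)) (enum c))"
    using True unfolding arrangement_def by (simp add: set_drop_filter_eq_set_drop)
  then show ?thesis using True unfolding right_end_def tail_part_def length_enum by simp
next
  case False
  then show ?thesis using arrangement(2) set_drop_subset unfolding right_end_def by metis
qed

lemma length_arrangement_ge:
  assumes "c < M" "\<not> big c \<Longrightarrow> card (piece A c) = l"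
  shows "l \<le> length (arrangement A c)"
proof (cases "big c")
  case True
  then have "l \<le> card (head_part c \<union> tail_part c)"
    using card_set_take_Un_set_drop_ge[OF enum(1)] l_ge_2
    unfolding head_part_def tail_part_def big_def length_enum by simp
  also have "\<dots> \<le> card (set (arrangement A c))"
    using True arrangement(2) head_part_subset[of c] tail_part_subset[of c]
      end_parts_disjoint_used[of c]
    by (intro card_mono[OF List.finite_set]) auto
  finally show ?thesis by (simp add: distinct_card[OF arrangement(1)])
next
  case False
  have "length (arrangement A c) = card (set (arrangement A c))"
    by (simp add: distinct_card[OF arrangement(1)])
  then show ?thesis using False assms(2) arrangement(2)[of c] by simp
qed

lemma arrangement_independent:
  assumes "c < M"
  shows "independent_set \<B> (set (arrangement A c))"
proof -
  have "set (arrangement A c) \<subseteq> {v \<in> X. col v = c \<or> col v = Suc c mod M}" if "big c"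
    using that arrangement(2) unfolding colour_class_def by auto
  moreover have "set (arrangement A c) \<subseteq> right_end A c \<union> left_end A (Suc c mod M)" if "\<not> big c"
    using that arrangement(2) unfolding right_end_def by auto
  ultimately show ?thesis
    using consecutive_classes_independent[OF assms] adm assms
    unfolding admissible_def by (meson independent_set_subset)
qed

lemma arrangements_partition:
  "\<And>c c'. c < M \<Longrightarrow> c' < M \<Longrightarrow> c \<noteq> c' \<Longrightarrow> set (arrangement A c) \<inter> set (arrangement A c') = {}"
  "(\<Union>c<M. set (arrangement A c)) = X"
proof -
  have A: "A c \<subseteq> reserve" "A c \<noteq> {} \<Longrightarrow> c < M \<and> \<not> big c" "c \<noteq> c' \<Longrightarrow> A c \<inter> A c' = {}"
    for c c' using adm unfolding admissible_def by auto
  \<comment> \<open>an element of \<open>used A\<close> comes from a big class but sits in the piece of a small one\<close>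
  have used_big: "big (col v)" if "v \<in> used A" for v
    using that used_subset[OF adm] unfolding reserve_def by auto
  have used_in: "v \<in> A c" if "v \<in> used A" "v \<in> set (arrangement A c)" for v c
    using that used_big arrangement(2) unfolding piece_def colour_class_def by (auto split: if_splits)
  show "set (arrangement A c) \<inter> set (arrangement A c') = {}"
    if "c < M" "c' < M" "c \<noteq> c'" for c c'
  proof -
    have "v \<notin> set (arrangement A c')" if "v \<in> set (arrangement A c)" for v
    proof (cases "v \<in> used A")
      case True
      then show ?thesis using used_in that A(3)[OF \<open>c \<noteq> c'\<close>] by blast
    next
      case False
      have "A d \<subseteq> used A" if "d < M" for d using that unfolding used_def by auto
      then have "col v = d" if "v \<in> set (arrangement A d)" "d < M" for d
        using that False arrangement(2) unfolding piece_def colour_class_def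
        by (auto split: if_splits)
      then show ?thesis using \<open>c \<noteq> c'\<close> that \<open>c < M\<close> \<open>c' < M\<close> by metis
    qed
    then show ?thesis by blast
  qed
  show "(\<Union>c<M. set (arrangement A c)) = X"
  proof (intro equalityI subsetI)
    fix v assume "v \<in> (\<Union>c<M. set (arrangement A c))"
    then show "v \<in> X"
      using arrangement(2) ends_subset(1)[OF adm] unfolding colour_class_def by (auto split: if_splits)
  next
    fix v assume v: "v \<in> X"
    show "v \<in> (\<Union>c<M. set (arrangement A c))"
    proof (cases "v \<in> used A")
      case True
      then obtain c where "c < M" "v \<in> A c" unfolding used_def by blast
      then show ?thesis using A(2)[of c] arrangement(2) unfolding piece_def by auto
    next
      case False
      then have "v \<in> set (arrangement A (col v))"
        using v arrangement(2) unfolding piece_def colour_class_def by auto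
      then show ?thesis using col_less[OF v] by blast
    qed
  qed
qed

lemma exists_cyclically_good_list_if_complete:
  assumes "\<And>c. c < M \<Longrightarrow> \<not> big c \<Longrightarrow> card (piece A c) = l"
  shows "\<exists>xs. distinct xs \<and> set xs = X \<and> cyclically_good (length xs) \<B> (nth xs) l"
proof (intro exI conjI)
  let ?xs = "concat (map (arrangement A) [0..<M])"
  show "distinct ?xs"
    using arrangement(1) arrangements_partition(1) by (rule distinct_concat_map_upt)
  show "set ?xs = X"
    using arrangements_partition(2) by (auto simp: atLeast0LessThan)
  have "independent_set \<B> (set (drop (length (arrangement A c) - (l - 1)) (arrangement A c))
      \<union> set (take (l - 1) (arrangement A (Suc c mod M))))" if "c < M" for c
  proof -
    have "independent_set \<B> (right_end A c \<union> left_end A (Suc c mod M))"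
      using adm that unfolding admissible_def by blast
    then show ?thesis
      by (rule independent_set_subset) (rule Un_mono[OF set_drop_arrangement set_take_arrangement])
  qed
  moreover have "1 \<le> M" "1 \<le> l" using M_ge_2 l_ge_2 by simp_all
  moreover have "l \<le> length (arrangement A c)" if "c < M" for c
    using length_arrangement_ge[OF that] assms[OF that] by blast
  ultimately show "cyclically_good (length ?xs) \<B> (nth ?xs) l"
    using arrangement_independent by (rule cyclically_good_concat[rotated 4])
qed

end

end

lemma fact_Suc_le_power: "fact (Suc m) \<le> (m + 2 :: nat) ^ m"
proof (induction m)
  case (Suc m)
  have "fact (Suc (Suc m)) = (m + 2) * fact (Suc m)" by simp
  also have "\<dots> \<le> (m + 2) * (m + 2) ^ m" using Suc.IH by (rule mult_le_mono2)
  also have "\<dots> = (m + 2) ^ Suc m" by simp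
  also have "\<dots> \<le> (Suc m + 2) ^ Suc m" by (rule power_mono) auto
  finally show ?case .
qed simp

lemma window_le_colour_count:
  fixes \<alpha> \<beta> \<rho> :: real
  assumes "2 \<le> t" "(t + 1) / fact t \<le> \<beta> ^ t" "0 < \<beta>" "0 < \<alpha>" "\<beta> * \<alpha> < 1"
    and "t + 1 \<le> \<alpha> * \<rho>"
  shows "\<alpha> * \<rho> \<le> \<beta> * \<rho> ^ (t - 1)"
proof -
  obtain s where t: "t = s + 2" using assms(1) by (metis add.commute le_add_diff_inverse)
  have \<rho>: "(real s + 3) / \<alpha> \<le> \<rho>" using assms(4,6) t by (simp add: pos_divide_le_eq mult.commute)
  moreover have "0 < (real s + 3) / \<alpha>" using assms(4) by simp
  ultimately have "0 < \<rho>" by linarith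
  have e: "Suc (s + 1) = s + 2" "s + 1 + 2 = s + 3" by simp_all
  have "fact (s + 2) \<le> (s + 3 :: nat) ^ (s + 1)"
    using fact_Suc_le_power[of "s + 1"] unfolding e .
  then have "real (fact (s + 2)) \<le> real ((s + 3) ^ (s + 1))"
    by (simp only: of_nat_le_iff)
  then have "fact (s + 2) \<le> (real s + 3) ^ (s + 1)"
    by (simp only: of_nat_fact of_nat_power of_nat_add of_nat_numeral)
  then have "1 \<le> (real s + 3) ^ (s + 1) / fact (s + 2)" by simp
  also have "\<dots> = (real s + 3) / fact (s + 2) * (real s + 3) ^ s"
    by (simp add: power_add mult.commute)
  also have "\<dots> \<le> \<beta> ^ (s + 2) * (real s + 3) ^ s"
    using assms(2) t by (intro mult_right_mono) (auto simp: add.commute)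
  finally have one_le: "1 \<le> \<beta> ^ (s + 2) * (real s + 3) ^ s" .
  \<comment> \<open>\<open>\<alpha>\<^sup>s\<^sup>+\<^sup>1 \<le> \<beta> (s + 3)\<^sup>s\<close>, using \<open>(\<beta> \<alpha>)\<^sup>s\<^sup>+\<^sup>1 \<le> 1\<close>\<close>
  have "\<alpha> ^ (s + 1) \<le> \<alpha> ^ (s + 1) * (\<beta> ^ (s + 2) * (real s + 3) ^ s)"
    using one_le assms(4) by simp
  also have "\<dots> = (\<beta> * \<alpha>) ^ (s + 1) * (\<beta> * (real s + 3) ^ s)"
    by (simp add: power_mult_distrib ac_simps)
  also have "\<dots> \<le> \<beta> * (real s + 3) ^ s"
  proof (rule mult_left_le_one_le)
    show "(\<beta> * \<alpha>) ^ (s + 1) \<le> 1"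
      using assms(3,4,5) by (intro power_le_one) auto
  qed (use assms(3,4) in auto)
  finally have "\<alpha> * \<alpha> ^ s \<le> \<beta> * (real s + 3) ^ s" by simp
  then have "\<alpha> \<le> \<beta> * ((real s + 3) / \<alpha>) ^ s"
    using assms(4) by (simp add: power_divide pos_le_divide_eq mult.commute)
  also have "\<dots> \<le> \<beta> * \<rho> ^ s"
    using \<rho> assms(3,4) by (intro mult_left_mono power_mono) auto
  finally show ?thesis
    using \<open>0 < \<rho>\<close> t by (simp add: mult.commute mult.left_commute)
qed

lemma window_and_colours_fit:
  fixes a \<alpha> \<beta> \<rho> N :: real
  assumes eq: "a * \<alpha> ^ t + 2 * (\<beta> * \<alpha>) = 1" and "0 < a" "0 < t" "0 \<le> \<rho>"
    and N: "N = \<beta> * \<rho> ^ (t - 1)"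
    and l: "real l \<le> \<alpha> * \<rho>" "real l \<le> N" "1 \<le> l" and M: "real M \<le> N + 1"
  shows "a * real l ^ t + real (M * (2 * l - 2)) < \<rho> ^ t"
proof -
  have "a * real l ^ t \<le> a * (\<alpha> ^ t * \<rho> ^ t)"
    using l(1) assms(2,4) by (simp add: mult_left_mono power_mono flip: power_mult_distrib)
  moreover have "real (M * (2 * l - 2)) < 2 * (\<beta> * \<alpha> * \<rho> ^ t)"
  proof -
    have "real (M * (2 * l - 2)) = real M * (2 * real l - 2)" using l(3) by (simp add: of_nat_diff)
    also have "\<dots> \<le> (N + 1) * (2 * real l - 2)"
      using M l(3) by (intro mult_right_mono) auto
    also have "\<dots> < 2 * (real l * N)" using l(2) by (simp add: algebra_simps)
    also have "\<dots> \<le> 2 * (\<alpha> * \<rho> * N)" using l(1,2,3) by (simp add: mult_right_mono)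
    also have "\<alpha> * \<rho> * N = \<beta> * \<alpha> * \<rho> ^ t"
      unfolding N using assms(3) by (simp add: power_eq_if algebra_simps)
    finally show ?thesis .
  qed
  moreover have "a * (\<alpha> ^ t * \<rho> ^ t) + 2 * (\<beta> * \<alpha> * \<rho> ^ t) = \<rho> ^ t"
    using arg_cong[OF eq, of "\<lambda>x. x * \<rho> ^ t"] by (simp add: algebra_simps)
  ultimately show ?thesis by linarith
qed

lemma exists_colour_count:
  fixes t lam n l :: nat and \<alpha> :: real
  assumes "2 \<le> t" "1 \<le> lam" "0 < \<alpha>"
    and "real lam * (2 ^ (t + 1) - 1) / fact t * \<alpha> ^ t
         + 2 * root t (exp 1 * real lam * real (t + 1) * (2 ^ (t + 1) - 1) / fact t) * \<alpha> = 1"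
    and "t + 1 \<le> l" "real l \<le> \<alpha> * root t (real n)"
  shows "\<exists>M::nat. 2 \<le> M \<and>
    exp 1 * ((2 ^ (t + 1) - 1) / real M ^ t) * (real (t + 1) * (real lam * real n ^ (t - 1) / fact t))
      \<le> 1 \<and>
    real lam * (2 ^ (t + 1) - 1) * real l ^ t / fact t + real (M * (2 * l - 2)) < real n"
proof -
  define a where "a = real lam * (2 ^ (t + 1) - 1) / fact t"
  define b where "b = exp 1 * real lam * real (t + 1) * (2 ^ (t + 1) - 1) / fact t"
  define \<beta> where "\<beta> = root t b"
  define \<rho> where "\<rho> = root t (real n)"
  \<comment> \<open>the number of colours is \<open>\<lceil>N\<rceil>\<close>: then the colouring condition holds with equality at \<open>N\<close>\<close>
  define N where "N = \<beta> * \<rho> ^ (t - 1)"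
  define M where "M = nat \<lceil>N\<rceil>"
  have "t > 0" using assms(1) by simp
  have "(2::real) ^ 1 \<le> 2 ^ (t + 1)" by (rule power_increasing) auto
  then have pow2: "(1::real) \<le> 2 ^ (t + 1) - 1" by simp
  then have pow2_pos: "(0::real) < 2 ^ (t + 1) - 1" by linarith
  have "0 < a" unfolding a_def using pow2_pos assms(2) by (intro divide_pos_pos mult_pos_pos) simp_all
  have "0 < b" unfolding b_def using pow2_pos assms(2) by (intro divide_pos_pos mult_pos_pos) simp_all
  have \<beta>: "0 < \<beta>" "\<beta> ^ t = b" unfolding \<beta>_def using \<open>t > 0\<close> \<open>0 < b\<close> by simp_all
  have \<rho>: "0 \<le> \<rho>" "\<rho> ^ t = real n" unfolding \<rho>_def using \<open>t > 0\<close> by simp_all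
  have eq: "a * \<alpha> ^ t + 2 * (\<beta> * \<alpha>) = 1"
    using assms(4) unfolding a_def b_def \<beta>_def by (simp only: mult.assoc)
  moreover have "0 < a * \<alpha> ^ t" using \<open>0 < a\<close> assms(3) by (intro mult_pos_pos zero_less_power)
  moreover have "0 < \<beta> * \<alpha>" using \<beta>(1) assms(3) by (rule mult_pos_pos)
  ultimately have "\<beta> * \<alpha> < 1" by linarith
  have l: "real l \<le> \<alpha> * \<rho>" using assms(6) unfolding \<rho>_def .
  have "1 * 1 * 1 \<le> exp 1 * real lam * (2 ^ (t + 1) - 1)"
    using pow2 assms(2) by (intro mult_mono) (auto simp: one_le_exp_iff)
  then have "(real t + 1) * 1 \<le> (real t + 1) * (exp 1 * real lam * (2 ^ (t + 1) - 1))"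
    by (intro mult_left_mono) simp_all
  then have "(real t + 1) / fact t \<le> (real t + 1) * (exp 1 * real lam * (2 ^ (t + 1) - 1)) / fact t"
    by (intro divide_right_mono) simp_all
  also have "\<dots> = \<beta> ^ t" unfolding \<beta>(2) b_def by (simp add: ac_simps)
  finally have "(real t + 1) / fact t \<le> \<beta> ^ t" .
  moreover have "real t + 1 \<le> \<alpha> * \<rho>" using assms(5) l by simp
  ultimately have "\<alpha> * \<rho> \<le> N"
    unfolding N_def using window_le_colour_count[OF assms(1) _ \<beta>(1) assms(3) \<open>\<beta> * \<alpha> < 1\<close>] by simp
  then have "real l \<le> N" using l by linarith
  then have "3 \<le> N" using assms(1,5) by simp
  have "N \<le> real M" "real M \<le> N + 1"
    unfolding M_def using \<open>3 \<le> N\<close> by (simp_all add: real_nat_ceiling_ge of_nat_nat)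
  have "N ^ t = b * real n ^ (t - 1)"
  proof -
    have "N ^ t = \<beta> ^ t * (\<rho> ^ t) ^ (t - 1)"
      unfolding N_def by (simp add: power_mult_distrib flip: power_mult) (simp add: mult.commute)
    then show ?thesis using \<beta> \<rho> by simp
  qed
  have "exp 1 * ((2 ^ (t + 1) - 1) / real M ^ t) * (real (t + 1) * (real lam * real n ^ (t - 1) / fact t))
      = b * real n ^ (t - 1) / real M ^ t"
    unfolding b_def by (simp add: field_simps)
  also have "\<dots> \<le> b * real n ^ (t - 1) / N ^ t"
    using \<open>N \<le> real M\<close> \<open>3 \<le> N\<close> \<open>0 < b\<close>
    by (intro divide_left_mono mult_pos_pos power_mono) auto
  also have "\<dots> = 1" using \<open>N ^ t = b * real n ^ (t - 1)\<close>[symmetric] \<open>3 \<le> N\<close> by simp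
  finally have colour: "exp 1 * ((2 ^ (t + 1) - 1) / real M ^ t)
      * (real (t + 1) * (real lam * real n ^ (t - 1) / fact t)) \<le> 1" .
  have "a * real l ^ t + real (M * (2 * l - 2)) < \<rho> ^ t"
    using assms(5) \<open>real l \<le> N\<close> \<open>real M \<le> N + 1\<close>
    by (intro window_and_colours_fit[OF eq \<open>0 < a\<close> \<open>t > 0\<close> \<rho>(1) N_def l]) auto
  then have room:
    "real lam * (2 ^ (t + 1) - 1) * real l ^ t / fact t + real (M * (2 * l - 2)) < real n"
    unfolding a_def \<rho>(2) by simp
  have "2 \<le> M" using \<open>N \<le> real M\<close> \<open>3 \<le> N\<close> by simp
  then show ?thesis using colour room by (intro exI[of _ M] conjI)
qed

lemma sequencing_nth:
  assumes "distinct xs" "set xs = X"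
  shows "sequencing (length xs) X (nth xs)"
  unfolding sequencing_def using assms by (intro bij_betw_nth) (auto simp: atLeast0LessThan)

lemma cyclically_good_if_less_block_size:
  assumes "partial_system k t lam X \<B>" "l < k"
  shows "cyclically_good n \<B> \<phi> l"
  unfolding cyclically_good_def independent_set_def
proof (intro allI impI ballI notI)
  fix S B assume S: "card S = l \<and> cyc_consecutive n \<phi> S" and B: "B \<in> \<B>" "B \<subseteq> S"
  from S obtain i where "S = (\<lambda>j. \<phi> ((i + j) mod n)) ` {0..<card S}"
    unfolding cyc_consecutive_def by blast
  then have "finite S" by (metis finite_atLeastLessThan finite_imageI)
  then have "card B \<le> card S" using B(2) by (rule card_mono)
  then show False using S B(1) assms unfolding partial_system_def by auto
qed

lemma exists_cyclically_good_list_given_colour_count: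
  fixes X :: "'a set" and \<B> :: "'a set set"
  assumes ps: "partial_system k t lam X \<B>" and "t + 1 \<le> k" "1 \<le> t" "k \<le> l" "2 \<le> M"
    and colour: "exp 1 * ((2 ^ (t + 1) - 1) / real M ^ t)
      * (real (t + 1) * (real lam * real (card X) ^ (t - 1) / fact t)) \<le> 1"
    and room: "real lam * (2 ^ (t + 1) - 1) * real l ^ t / fact t + real (M * (2 * l - 2))
      < real (card X)"
  shows "\<exists>xs. distinct xs \<and> set xs = X \<and> cyclically_good (length xs) \<B> (nth xs) l"
proof -
  have finX: "finite X" and blocks: "\<And>B. B \<in> \<B> \<Longrightarrow> B \<subseteq> X \<and> card B = k"
    using ps unfolding partial_system_def by auto
  have degree: "real (card {B \<in> \<B>. v \<in> B}) \<le> real lam * real (card X) ^ (t - 1) / fact t"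
    if "v \<in> X" for v
  proof -
    have "real (card {B \<in> \<B>. v \<in> B} * fact t) \<le> real (lam * card X ^ (t - 1))"
      using partial_system_degree_le[OF ps assms(2,3) that] by (simp only: of_nat_le_iff)
    then show ?thesis by (simp add: pos_le_divide_eq)
  qed
  have "\<exists>col. (\<forall>v\<in>X. col v < M) \<and>
      (\<forall>B\<in>\<B>. \<forall>j<M. \<not> B \<subseteq> {v \<in> X. col v = j \<or> col v = Suc j mod M})"
  proof (rule exists_colouring_without_edge_in_consecutive_classes[OF finX _ _ assms(5) degree])
    show "B \<subseteq> X \<and> t + 1 \<le> card B" if "B \<in> \<B>" for B using blocks[OF that] assms(2) by simp
    show "exp 1 * ((2 ^ (t + 1) - 1) / real M ^ (t + 1 - 1))
        * (real (t + 1) * (real lam * real (card X) ^ (t - 1) / fact t)) \<le> 1"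
      using colour by simp
  qed simp_all
  then obtain col where col_less: "\<forall>v\<in>X. col v < M"
    and no_edge: "\<forall>B\<in>\<B>. \<forall>j<M. \<not> B \<subseteq> {v \<in> X. col v = j \<or> col v = Suc j mod M}"
    by blast
  interpret cyclic_colouring X \<B> M l col
  proof
    show "independent_set \<B> {v \<in> X. col v = c \<or> col v = Suc c mod M}" if "c < M" for c
      using no_edge that unfolding independent_set_def by blast
  qed (use finX col_less assms(2-5) in auto)
  obtain A where adm: "admissible A" and complete: "\<forall>c<M. \<not> big c \<longrightarrow> card (piece A c) = l"
    using exists_complete_admissible[OF ps _ room] assms(2) by auto
  show ?thesis using complete by (intro exists_cyclically_good_list_if_complete[OF adm]) simp
qed

lemma exists_cyclically_good_list:
  fixes \<alpha> :: real
  assumes "t + 1 \<le> k" "2 \<le> t" "1 \<le> lam" "0 < \<alpha>"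
    and "real lam * (2 ^ (t + 1) - 1) / fact t * \<alpha> ^ t
         + 2 * root t (exp 1 * real lam * real (t + 1) * (2 ^ (t + 1) - 1) / fact t) * \<alpha> = 1"
    and ps: "partial_system k t lam X \<B>" and l: "real l \<le> \<alpha> * root t (real (card X))"
  shows "\<exists>xs. distinct xs \<and> set xs = X \<and> cyclically_good (length xs) \<B> (nth xs) l"
proof (cases "l < k")
  case True
  have "finite X" using ps unfolding partial_system_def by simp
  then obtain xs where "distinct xs" "set xs = X" using finite_distinct_list by blast
  moreover have "cyclically_good (length xs) \<B> (nth xs) l"
    by (rule cyclically_good_if_less_block_size[OF ps True])
  ultimately show ?thesis by blast
next
  case False
  then have "t + 1 \<le> l" "k \<le> l" "1 \<le> t" using assms(1,2) by simp_all
  obtain M where "2 \<le> M"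
    "exp 1 * ((2 ^ (t + 1) - 1) / real M ^ t)
      * (real (t + 1) * (real lam * real (card X) ^ (t - 1) / fact t)) \<le> 1"
    "real lam * (2 ^ (t + 1) - 1) * real l ^ t / fact t + real (M * (2 * l - 2)) < real (card X)"
    using exists_colour_count[OF assms(2-5) \<open>t + 1 \<le> l\<close> l] by blast
  then show ?thesis
    using exists_cyclically_good_list_given_colour_count[OF ps assms(1) \<open>1 \<le> t\<close> \<open>k \<le> l\<close>]
    by blast
qed

theorem theorem1:
  fixes k t lam n :: nat and \<alpha> :: real and X :: "'a set" and \<B> :: "'a set set"
  assumes "k \<ge> t + 1" and "t \<ge> 2" and "lam \<ge> 1"
    and "\<alpha> > 0"
    and "real lam * (2 ^ (t + 1) - 1) / fact t * \<alpha> ^ t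
         + 2 * root t (exp 1 * real lam * real (t + 1) * (2 ^ (t + 1) - 1) / fact t) * \<alpha> = 1"
    and "n \<ge> k" and "card X = n" and "partial_system k t lam X \<B>"
  shows "\<forall>l::nat. l \<ge> 1 \<and> real l \<le> \<alpha> * root t (real n) \<longrightarrow>
           (\<exists>\<phi>. sequencing n X \<phi> \<and> cyclically_good n \<B> \<phi> l)"
proof (intro allI impI)
  fix l :: nat
  assume "l \<ge> 1 \<and> real l \<le> \<alpha> * root t (real n)"
  then obtain xs where xs: "distinct xs" "set xs = X" "cyclically_good (length xs) \<B> (nth xs) l"
    using exists_cyclically_good_list[OF assms(1-5,8)] assms(7) by blast
  have "length xs = n" using distinct_card[OF xs(1)] xs(2) assms(7) by simp
  then show "\<exists>\<phi>. sequencing n X \<phi> \<and> cyclically_good n \<B> \<phi> l"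
    using sequencing_nth[OF xs(1,2)] xs(3) by auto
qed

end
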